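(* Let $f:\mathbb{R}^n\to(-\infty,+\infty]$ be a proper closed function with $S=\arg\min f$ nonempty, let $\bar x\in S$, and let $\mathcal{M}$ be a $C^1$-smooth embedded submanifold containing $\bar x$ (with induced metric). Suppose $f$ is $C^1$-partly smooth and prox-regular around $\bar x$ relative to $\mathcal{M}$ with $0\in\operatorname{ri}\partial f(\bar x)$, and $f$ is subdifferentially continuous at $\bar x$. Then the following are equivalent: (i) there exist $\epsilon,\mu>0$ such that $\mu\,\operatorname{dist}(x,S)\le\operatorname{dist}(0,\partial f(x))$ for all $x\in B_\epsilon(\bar x)$; (ii) there exist $\epsilon,\mu>0$ such that $\mu\,\operatorname{dist}(x,S\cap\mathcal{M})\le\|\nabla_{\mathcal{M}}f(x)\|$ for all $x\in B_\epsilon(\bar x)\cap\mathcal{M}$.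
   Context: $\hat\partial f$ is the Fréchet and $\partial f$ the limiting subdifferential; $\operatorname{dist}(0,\emptyset)=+\infty$. Partial smoothness: $f$ is partly smooth at a point $x\in\mathcal M$ relative to a $C^p$ manifold $\mathcal{M}$ (for all subgradients) if: (Regularity) $\hat\partial f(z)=\partial f(z)\neq\varnothing$ for all $z\in\mathcal{M}$ near $x$; (Restricted smoothness) $f|_{\mathcal{M}}$ is $C^p$-smooth around $x$; (Sharpness) $\operatorname{par}\partial f(x)$ (subspace parallel to the affine hull) equals $N_x\mathcal{M}$; (Inner semicontinuity) for every $y\in\partial f(x)$ and every sequence $x_r\to x$ in $\mathcal{M}$ there exist $y_r\in\partial f(x_r)$ with $y_r\to y$. "Around $\bar x$ relative to $\mathcal M$" means at every point of $\mathcal M$ near $\bar x$ (with $p=1$). Prox-regularity of $f$ at $x$ for $\bar v\in\hat\partial f(x)$: there are $\epsilon>0,\rho\ge0$ with $f(x'')\ge f(x')+\langle v,x''-x'\rangle-\frac\rho2\|x''-x'\|^2$ for all $x',x''\in B_\epsilon(x)$, $v\in\hat\partial f(x')$ with $\|v-\bar v\|<\epsilon$ and $f(x')<f(x)+\epsilon$; "prox-regular around $\bar x$ relative to $\mathcal M$" is taken to mean prox-regular at every point of $\mathcal M$ near $\bar x$ for each of its subgradients. Subdifferential continuity at $\bar x$: $x_k\to\bar x$, $v_k\in\partial f(x_k)$, $v_k\to\bar v\in\partial f(\bar x)$ imply $f(x_k)\to f(\bar x)$. $\nabla_{\mathcal M}f$ is the Riemannian gradient of $f|_{\mathcal M}$.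 *)

theory Defs
  imports "HOL-Analysis.Analysis"
begin

definition proper_fun :: "('a \<Rightarrow> ereal) \<Rightarrow> bool" where
  "proper_fun f \<longleftrightarrow> (\<exists>x. f x \<noteq> \<infinity>) \<and> (\<forall>x. f x \<noteq> -\<infinity>)"

text \<open>Closed = lower semicontinuous = closed epigraph.\<close>
definition closed_fun :: "('a::topological_space \<Rightarrow> ereal) \<Rightarrow> bool" where
  "closed_fun f \<longleftrightarrow> closed {(x, r::real). f x \<le> ereal r}"

definition argmin_set :: "('a \<Rightarrow> ereal) \<Rightarrow> 'a set" where
  "argmin_set f = {x. \<forall>y. f x \<le> f y}"

definition frechet_subdiff :: "('a::real_inner \<Rightarrow> ereal) \<Rightarrow> 'a \<Rightarrow> 'a set" where
  "frechet_subdiff f x = {v. \<bar>f x\<bar> \<noteq> \<infinity> \<and>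
     (\<forall>e>0. \<exists>d>0. \<forall>y. dist y x < d \<longrightarrow>
        ereal (real_of_ereal (f x) + inner v (y - x) - e * norm (y - x)) \<le> f y)}"

definition limiting_subdiff :: "('a::real_inner \<Rightarrow> ereal) \<Rightarrow> 'a \<Rightarrow> 'a set" where
  "limiting_subdiff f x = {v. \<bar>f x\<bar> \<noteq> \<infinity> \<and>
     (\<exists>X V. X \<longlonglongrightarrow> x \<and> (\<lambda>k. f (X k)) \<longlonglongrightarrow> f x \<and>
            (\<forall>k. V k \<in> frechet_subdiff f (X k)) \<and> V \<longlonglongrightarrow> v)}"

text \<open>dist(0, A) with dist(0, {}) = +infinity.\<close>
definition dist0 :: "'a::real_normed_vector set \<Rightarrow> ereal" where
  "dist0 A = (if A = {} then \<infinity> else ereal (infdist 0 A))"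

definition par :: "'a::real_vector set \<Rightarrow> 'a set" where
  "par A = {u - v | u v. u \<in> affine hull A \<and> v \<in> affine hull A}"

definition C1_within :: "'a::real_normed_vector set \<Rightarrow> 'a set \<Rightarrow> ('a \<Rightarrow> 'b::real_normed_vector) \<Rightarrow> bool" where
  "C1_within E W g \<longleftrightarrow> (\<exists>g'. (\<forall>w\<in>W. (g has_derivative g' w) (at w within E)) \<and>
                           (\<forall>u\<in>E. continuous_on W (\<lambda>z. g' z u)))"

text \<open>Local C^1 parametrization (immersion + homeomorphism onto M \<inter> U) of M,
  defined on a relatively open subset W of a linear subspace E (so E plays the role of R^d).\<close>
definition local_param :: "'a::euclidean_space set \<Rightarrow> 'a set \<Rightarrow> 'a set \<Rightarrow> 'a set \<Rightarrow> ('a \<Rightarrow> 'a) \<Rightarrow> bool" where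
  "local_param M E U W \<phi> \<longleftrightarrow> subspace E \<and> open U \<and> openin (top_of_set E) W \<and>
     \<phi> ` W = M \<inter> U \<and> inj_on \<phi> W \<and> continuous_on (M \<inter> U) (inv_into W \<phi>) \<and>
     (\<exists>\<phi>'. (\<forall>w\<in>W. (\<phi> has_derivative \<phi>' w) (at w within E) \<and> inj_on (\<phi>' w) E) \<and>
           (\<forall>u\<in>E. continuous_on W (\<lambda>z. \<phi>' z u)))"

definition C1_submanifold :: "'a::euclidean_space set \<Rightarrow> bool" where
  "C1_submanifold M \<longleftrightarrow> (\<forall>p\<in>M. \<exists>E U W \<phi>. p \<in> U \<and> local_param M E U W \<phi>)"

definition restricted_C1 :: "('a::euclidean_space \<Rightarrow> ereal) \<Rightarrow> 'a set \<Rightarrow> 'a \<Rightarrow> bool" where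
  "restricted_C1 f M x \<longleftrightarrow> (\<exists>r>0. \<forall>p\<in>M \<inter> ball x r. \<exists>E U W \<phi>. p \<in> U \<and> local_param M E U W \<phi> \<and>
       (\<forall>w\<in>W. \<bar>f (\<phi> w)\<bar> \<noteq> \<infinity>) \<and> C1_within E W (\<lambda>w. real_of_ereal (f (\<phi> w))))"

definition curve_in :: "'a::euclidean_space set \<Rightarrow> 'a \<Rightarrow> (real \<Rightarrow> 'a) \<Rightarrow> 'a \<Rightarrow> bool" where
  "curve_in M x \<gamma> u \<longleftrightarrow> \<gamma> 0 = x \<and> (\<exists>e>0. \<forall>t. \<bar>t\<bar> < e \<longrightarrow> \<gamma> t \<in> M) \<and>
      (\<gamma> has_vector_derivative u) (at 0)"

definition tangent_space :: "'a::euclidean_space set \<Rightarrow> 'a \<Rightarrow> 'a set" where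
  "tangent_space M x = {u. \<exists>\<gamma>. curve_in M x \<gamma> u}"

definition normal_space :: "'a::euclidean_space set \<Rightarrow> 'a \<Rightarrow> 'a set" where
  "normal_space M x = {w. \<forall>u\<in>tangent_space M x. inner w u = 0}"

definition riem_grad :: "('a::euclidean_space \<Rightarrow> ereal) \<Rightarrow> 'a set \<Rightarrow> 'a \<Rightarrow> 'a" where
  "riem_grad f M x = (THE v. v \<in> tangent_space M x \<and>
     (\<forall>\<gamma> u. curve_in M x \<gamma> u \<longrightarrow>
        ((\<lambda>t. real_of_ereal (f (\<gamma> t))) has_real_derivative (inner v u)) (at 0)))"

definition partly_smooth_at :: "('a::euclidean_space \<Rightarrow> ereal) \<Rightarrow> 'a set \<Rightarrow> 'a \<Rightarrow> bool" where
  "partly_smooth_at f M x \<longleftrightarrow> x \<in> M \<and>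
     (\<exists>r>0. \<forall>z\<in>M \<inter> ball x r. frechet_subdiff f z = limiting_subdiff f z \<and> limiting_subdiff f z \<noteq> {}) \<and>
     restricted_C1 f M x \<and>
     par (limiting_subdiff f x) = normal_space M x \<and>
     (\<forall>y\<in>limiting_subdiff f x. \<forall>X. (\<forall>k. X k \<in> M) \<and> X \<longlonglongrightarrow> x \<longrightarrow>
        (\<exists>Y. (\<forall>k. Y k \<in> limiting_subdiff f (X k)) \<and> Y \<longlonglongrightarrow> y))"

definition partly_smooth_around :: "('a::euclidean_space \<Rightarrow> ereal) \<Rightarrow> 'a set \<Rightarrow> 'a \<Rightarrow> bool" where
  "partly_smooth_around f M x \<longleftrightarrow> (\<exists>r>0. \<forall>z\<in>M \<inter> ball x r. partly_smooth_at f M z)"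

definition prox_regular_at :: "('a::real_inner \<Rightarrow> ereal) \<Rightarrow> 'a \<Rightarrow> 'a \<Rightarrow> bool" where
  "prox_regular_at f x vb \<longleftrightarrow> (\<exists>e>0. \<exists>\<rho>\<ge>0. \<forall>x' x'' v.
      x' \<in> ball x e \<and> x'' \<in> ball x e \<and> v \<in> frechet_subdiff f x' \<and> norm (v - vb) < e \<and>
      f x' < f x + ereal e \<longrightarrow>
      ereal (real_of_ereal (f x') + inner v (x'' - x') - \<rho> / 2 * (norm (x'' - x'))\<^sup>2) \<le> f x'')"

definition prox_regular_around :: "('a::euclidean_space \<Rightarrow> ereal) \<Rightarrow> 'a set \<Rightarrow> 'a \<Rightarrow> bool" where
  "prox_regular_around f M x \<longleftrightarrow>
     (\<exists>r>0. \<forall>z\<in>M \<inter> ball x r. \<forall>v\<in>limiting_subdiff f z. prox_regular_at f z v)"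

definition subdiff_continuous_at :: "('a::real_inner \<Rightarrow> ereal) \<Rightarrow> 'a \<Rightarrow> bool" where
  "subdiff_continuous_at f x \<longleftrightarrow> (\<forall>X V v. X \<longlonglongrightarrow> x \<and> (\<forall>k. V k \<in> limiting_subdiff f (X k)) \<and>
      V \<longlonglongrightarrow> v \<and> v \<in> limiting_subdiff f x \<longrightarrow> (\<lambda>k. f (X k)) \<longlonglongrightarrow> f x)"

end

theory Submission
  imports Defs
begin

(*
  On M near xbar the Riemannian gradient is the least-norm limiting subgradient: by sharpness every
  subgradient differs from it by a normal vector, and when it is small it is itself a subgradient,
  because 0 \<in> ri (subdifferential at xbar) and inner semicontinuity keep a ball of the affine hull
  of the subdifferential inside the subdifferential at all nearby points of M. Off M, points near
  xbar have no small subgradients (identification): for such an x with subgradient v, the proximal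
  point y on M of f at x + v / (\<rho> + 1) carries the subgradient (\<rho> + 1) (x - y) + v, and
  prox-regularity then forces x = y. In particular the minimisers near xbar lie on M, so near xbar
  the distances to S and to S \<inter> M agree, and the two error bounds are equivalent.
*)

section \<open>Affine hulls and separation\<close>

lemma par_eq_affine_hull_translate:
  assumes "w \<in> affine hull C"
  shows "par C = (\<lambda>x. x - w) ` (affine hull C)"
proof
  show "par C \<subseteq> (\<lambda>x. x - w) ` (affine hull C)"
  proof
    fix d assume "d \<in> par C"
    then obtain u v where uv: "u \<in> affine hull C" "v \<in> affine hull C" "d = u - v"
      unfolding par_def by auto
    have "w + 1 *\<^sub>R (u - v) \<in> affine hull C"
      by (rule mem_affine_3_minus) (use uv assms in auto)
    then show "d \<in> (\<lambda>x. x - w) ` (affine hull C)"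
      using uv by (auto intro!: image_eqI[where x="w + (u - v)"])
  qed
next
  show "(\<lambda>x. x - w) ` (affine hull C) \<subseteq> par C"
    using assms unfolding par_def by auto
qed

lemma subspace_par:
  assumes "C \<noteq> {}"
  shows "subspace (par C)"
proof -
  obtain w where "w \<in> C"
    using assms by auto
  then have w: "w \<in> affine hull C"
    by (simp add: hull_inc)
  show ?thesis
    unfolding par_eq_affine_hull_translate[OF w]
    by (rule affine_diffs_subspace_subtract) (auto simp: w)
qed

lemma affine_hull_add_par:
  assumes "v \<in> affine hull C" "d \<in> par C"
  shows "v + d \<in> affine hull C"
  using assms par_eq_affine_hull_translate[OF assms(1)] by auto

lemma separating_direction_par:
  fixes C :: "'a::euclidean_space set"
  assumes "convex C" "C \<noteq> {}" "w \<in> affine hull C" "w \<notin> C"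
  obtains d where "d \<in> par C" "norm d = 1" "\<And>v. v \<in> C \<Longrightarrow> inner d v \<le> inner d w"
proof -
  let ?C = "(\<lambda>v. v - w) ` C"
  have "convex ?C"
    using assms(1) by (simp add: convex_translation_subtract)
  moreover have "?C \<noteq> {}" "0 \<notin> ?C"
    using assms(2,4) by auto
  ultimately obtain a where a: "a \<in> span ?C" "a \<noteq> 0" "\<And>x. x \<in> ?C \<Longrightarrow> 0 \<le> inner a x"
    using separating_hyperplane_set_0_inspan by blast
  have "?C \<subseteq> par C"
    using assms(3) unfolding par_def by (auto intro: hull_inc)
  then have "a \<in> par C"
    using a(1) span_minimal[OF _ subspace_par[OF assms(2)]] by blast
  then have "(- inverse (norm a)) *\<^sub>R a \<in> par C"
    by (rule subspace_scale[OF subspace_par[OF assms(2)]])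
  moreover have "inner ((- inverse (norm a)) *\<^sub>R a) v \<le> inner ((- inverse (norm a)) *\<^sub>R a) w"
    if "v \<in> C" for v
    using a(3)[of "v - w"] that by (simp add: inner_diff_right mult_left_mono)
  ultimately show ?thesis
    using that[of "(- inverse (norm a)) *\<^sub>R a"] a(2) by auto
qed

lemma rel_interior_zero_par:
  fixes C :: "'a::euclidean_space set"
  assumes "0 \<in> rel_interior C" "d \<in> par C" "d \<noteq> 0"
  obtains v where "v \<in> C" "0 < inner d v"
proof -
  obtain e where e: "e > 0" "ball 0 e \<inter> affine hull C \<subseteq> C"
    using assms(1) unfolding mem_rel_interior_ball by blast
  have "0 \<in> C"
    using assms(1) rel_interior_subset by blast
  define v where "v = (e / (2 * norm d)) *\<^sub>R d"
  have "v \<in> par C"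
    unfolding v_def using \<open>0 \<in> C\<close> by (intro subspace_scale[OF subspace_par assms(2)]) auto
  then have "0 + v \<in> affine hull C"
    using \<open>0 \<in> C\<close> by (intro affine_hull_add_par) (auto intro: hull_inc)
  moreover have "norm v < e"
    using e(1) assms(3) by (simp add: v_def)
  ultimately have "v \<in> C"
    using e(2) by auto
  moreover have "0 < inner d v"
    using e(1) assms(3) by (simp add: v_def power2_norm_eq_inner[symmetric] power2_eq_square)
  ultimately show ?thesis
    using that by blast
qed

section \<open>Subdifferentials\<close>

lemma convex_frechet_subdiff: "convex (frechet_subdiff f x)"
proof (rule convexI)
  fix v1 v2 and a b :: real
  assume v: "v1 \<in> frechet_subdiff f x" "v2 \<in> frechet_subdiff f x"
    and ab: "0 \<le> a" "0 \<le> b" "a + b = 1"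
  have fin: "\<bar>f x\<bar> \<noteq> \<infinity>"
    using v(1) unfolding frechet_subdiff_def by auto
  then obtain r where r: "f x = ereal r"
    by (cases "f x") auto
  show "a *\<^sub>R v1 + b *\<^sub>R v2 \<in> frechet_subdiff f x"
    unfolding frechet_subdiff_def
  proof (intro CollectI conjI allI impI fin)
    fix e :: real assume "e > 0"
    obtain d1 where d1: "d1 > 0" "\<forall>y. dist y x < d1 \<longrightarrow> ereal (r + inner v1 (y - x) - e * norm (y - x)) \<le> f y"
      using v(1) \<open>e > 0\<close> unfolding frechet_subdiff_def r by auto
    obtain d2 where d2: "d2 > 0" "\<forall>y. dist y x < d2 \<longrightarrow> ereal (r + inner v2 (y - x) - e * norm (y - x)) \<le> f y"
      using v(2) \<open>e > 0\<close> unfolding frechet_subdiff_def r by auto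
    have "ereal (r + inner (a *\<^sub>R v1 + b *\<^sub>R v2) (y - x) - e * norm (y - x)) \<le> f y"
      if y: "dist y x < min d1 d2" for y
    proof (cases "f y")
      case (real s)
      have "r + inner v1 (y - x) - e * norm (y - x) \<le> s" "r + inner v2 (y - x) - e * norm (y - x) \<le> s"
        using d1(2) d2(2) y real by auto
      then have "a * (r + inner v1 (y - x) - e * norm (y - x))
          + b * (r + inner v2 (y - x) - e * norm (y - x)) \<le> a * s + b * s"
        using ab by (intro add_mono mult_left_mono) auto
      moreover have "a * s + b * s = s" "a * r + b * r = r" "a * (e * norm (y - x)) + b * (e * norm (y - x)) = e * norm (y - x)"
        using ab(3) by (metis distrib_right mult_1)+
      ultimately show ?thesis
        using real by (simp add: inner_add_left algebra_simps)
    qed (use d1(2) y in auto)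
    then show "\<exists>d>0. \<forall>y. dist y x < d \<longrightarrow>
        ereal (real_of_ereal (f x) + inner (a *\<^sub>R v1 + b *\<^sub>R v2) (y - x) - e * norm (y - x)) \<le> f y"
      using d1(1) d2(1) r by (intro exI[of _ "min d1 d2"]) auto
  qed
qed

lemma frechet_subdiff_subset_limiting: "frechet_subdiff f x \<subseteq> limiting_subdiff f x"
  unfolding limiting_subdiff_def
  by (auto simp: frechet_subdiff_def intro!: exI[of _ "\<lambda>_. x"] exI[of _ "\<lambda>_. v" for v])

lemma limiting_subdiff_finite: "v \<in> limiting_subdiff f x \<Longrightarrow> \<bar>f x\<bar> \<noteq> \<infinity>"
  unfolding limiting_subdiff_def by auto

lemma zero_frechet_subdiff_argmin:
  assumes "x \<in> argmin_set f" "\<bar>f x\<bar> \<noteq> \<infinity>"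
  shows "0 \<in> frechet_subdiff f x"
proof -
  have "ereal (real_of_ereal (f x) - e * norm (y - x)) \<le> f y" if "e > 0" for e y
  proof -
    have "ereal (real_of_ereal (f x) - e * norm (y - x)) \<le> f x"
      using assms(2) that by (cases "f x") auto
    also have "\<dots> \<le> f y"
      using assms(1) unfolding argmin_set_def by auto
    finally show ?thesis .
  qed
  then show ?thesis
    using assms(2) unfolding frechet_subdiff_def by (auto intro: exI[of _ 1])
qed

lemma compact_prox_point:
  fixes f :: "'a::real_normed_vector \<Rightarrow> ereal"
  assumes C: "compact C" "xb \<in> C" "continuous_on C (\<lambda>x. real_of_ereal (f x))"
    "\<And>x. x \<in> C \<Longrightarrow> \<bar>f x\<bar> \<noteq> \<infinity>"
    and xbS: "xb \<in> argmin_set f" and lam: "lam > 0"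
  obtains y where "y \<in> C"
    "\<And>y'. y' \<in> C \<Longrightarrow> real_of_ereal (f y) + (norm (y - z))\<^sup>2 / (2 * lam)
       \<le> real_of_ereal (f y') + (norm (y' - z))\<^sup>2 / (2 * lam)"
    "dist z y \<le> dist z xb" "f y \<le> f xb + ereal ((dist z xb)\<^sup>2 / (2 * lam))"
proof -
  define h where "h x = real_of_ereal (f x) + (norm (x - z))\<^sup>2 / (2 * lam)" for x
  have "continuous_on C h"
    unfolding h_def using C(3) lam by (intro continuous_intros) auto
  then have "\<exists>y\<in>C. \<forall>y'\<in>C. h y \<le> h y'"
    using C(2) by (intro continuous_attains_inf[OF C(1)]) auto
  then obtain y where y: "y \<in> C" "\<And>y'. y' \<in> C \<Longrightarrow> h y \<le> h y'"
    by blast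
  obtain a b where ab: "f xb = ereal a" "f y = ereal b"
    using C(4)[OF C(2)] C(4)[OF y(1)] by (cases "f xb"; cases "f y") auto
  have "f xb \<le> f y"
    using xbS unfolding argmin_set_def by blast
  then have "a \<le> b"
    using ab by simp
  moreover have "h y \<le> h xb"
    using y C(2) by blast
  ultimately have "(norm (y - z))\<^sup>2 / (2 * lam) \<le> (norm (xb - z))\<^sup>2 / (2 * lam)"
    unfolding h_def ab by simp
  then have "(norm (y - z))\<^sup>2 \<le> (norm (xb - z))\<^sup>2"
    using lam by (simp add: divide_le_cancel)
  then have "norm (y - z) \<le> norm (xb - z)"
    by (rule power2_le_imp_le) simp
  then have dist: "dist z y \<le> dist z xb"
    by (simp add: dist_norm norm_minus_commute)
  have "0 \<le> (norm (y - z))\<^sup>2 / (2 * lam)"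
    using lam by simp
  then have "b \<le> a + (norm (xb - z))\<^sup>2 / (2 * lam)"
    using \<open>h y \<le> h xb\<close> unfolding h_def ab by simp
  then have "f y \<le> f xb + ereal ((dist z xb)\<^sup>2 / (2 * lam))"
    using ab by (simp add: dist_norm norm_minus_commute)
  show ?thesis
    by (rule that[OF y(1) _ dist \<open>f y \<le> _\<close>]) (use y(2) in \<open>simp add: h_def\<close>)
qed

lemma prox_regular_at_limiting:
  assumes "prox_regular_at f xb vb"
  obtains e \<rho> where "e > 0" "\<rho> \<ge> 0"
    "\<And>x' x'' v. x' \<in> ball xb e \<Longrightarrow> x'' \<in> ball xb e \<Longrightarrow> v \<in> limiting_subdiff f x' \<Longrightarrow>
       norm (v - vb) < e \<Longrightarrow> f x' < f xb + ereal e \<Longrightarrow>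
       ereal (real_of_ereal (f x') + inner v (x'' - x') - \<rho> / 2 * (norm (x'' - x'))\<^sup>2) \<le> f x''"
proof -
  obtain e \<rho> where e: "e > 0" "\<rho> \<ge> 0" and pr: "\<And>x' x'' v. x' \<in> ball xb e \<Longrightarrow> x'' \<in> ball xb e \<Longrightarrow>
       v \<in> frechet_subdiff f x' \<Longrightarrow> norm (v - vb) < e \<Longrightarrow> f x' < f xb + ereal e \<Longrightarrow>
       ereal (real_of_ereal (f x') + inner v (x'' - x') - \<rho> / 2 * (norm (x'' - x'))\<^sup>2) \<le> f x''"
    using assms unfolding prox_regular_at_def by blast
  have "ereal (real_of_ereal (f x') + inner v (x'' - x') - \<rho> / 2 * (norm (x'' - x'))\<^sup>2) \<le> f x''"
    if x': "x' \<in> ball xb e" and x'': "x'' \<in> ball xb e" and v: "v \<in> limiting_subdiff f x'"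
      and nv: "norm (v - vb) < e" and fx': "f x' < f xb + ereal e" for x' x'' v
  proof -
    obtain X V where XV: "X \<longlonglongrightarrow> x'" "(\<lambda>k. f (X k)) \<longlonglongrightarrow> f x'"
        "\<And>k. V k \<in> frechet_subdiff f (X k)" "V \<longlonglongrightarrow> v"
      using v unfolding limiting_subdiff_def by blast
    obtain r where r: "f x' = ereal r"
      using limiting_subdiff_finite[OF v] by (cases "f x'") auto
    have "eventually (\<lambda>k. X k \<in> ball xb e \<and> norm (V k - vb) < e \<and> f (X k) < f xb + ereal e) sequentially"
      using x' nv fx' by (intro eventually_conj topological_tendstoD[OF XV(1)] order_tendstoD(2)[OF XV(2)]
          order_tendstoD(2)[OF tendsto_norm[OF tendsto_diff[OF XV(4) tendsto_const]]]) auto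
    then have "eventually (\<lambda>k. ereal (real_of_ereal (f (X k)) + inner (V k) (x'' - X k)
        - \<rho> / 2 * (norm (x'' - X k))\<^sup>2) \<le> f x'') sequentially"
      by eventually_elim (use pr x'' XV(3) in blast)
    moreover have "(\<lambda>k. ereal (real_of_ereal (f (X k)) + inner (V k) (x'' - X k) - \<rho> / 2 * (norm (x'' - X k))\<^sup>2))
        \<longlonglongrightarrow> ereal (r + inner v (x'' - x') - \<rho> / 2 * (norm (x'' - x'))\<^sup>2)"
      using XV(2) unfolding r
      by (intro tendsto_ereal tendsto_intros lim_real_of_ereal XV(1,4))
    ultimately have "ereal (r + inner v (x'' - x') - \<rho> / 2 * (norm (x'' - x'))\<^sup>2) \<le> f x''"
      using tendsto_le[OF trivial_limit_sequentially tendsto_const] by blast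
    then show ?thesis
      using r by simp
  qed
  with e show ?thesis
    using that by blast
qed

lemma sequentially_imp_near_pair:
  fixes a :: "'a::metric_space" and b :: "'b::metric_space"
  assumes "\<And>X Y. X \<longlonglongrightarrow> a \<Longrightarrow> Y \<longlonglongrightarrow> b \<Longrightarrow> \<exists>k. P (X k) (Y k)"
  shows "\<exists>\<delta>>0. \<forall>x y. dist x a < \<delta> \<longrightarrow> dist y b < \<delta> \<longrightarrow> P x y"
proof (rule ccontr)
  assume "\<not> ?thesis"
  then have "\<forall>k. \<exists>x y. dist x a < inverse (Suc k) \<and> dist y b < inverse (Suc k) \<and> \<not> P x y"
    by (metis inverse_positive_iff_positive of_nat_0_less_iff zero_less_Suc)
  then obtain X Y where XY: "\<And>k. dist (X k) a < inverse (Suc k)" "\<And>k. dist (Y k) b < inverse (Suc k)"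
      "\<And>k. \<not> P (X k) (Y k)"
    by metis
  have "X \<longlonglongrightarrow> a" "Y \<longlonglongrightarrow> b"
    using XY(1,2) by (auto intro!: tendsto_dist_iff[THEN iffD2] always_eventually less_imp_le
        Lim_null_comparison[OF _ LIMSEQ_inverse_real_of_nat])
  then show False
    using assms XY(3) by blast
qed

lemma subdiff_continuous_at_upper:
  assumes "subdiff_continuous_at f xb" "vb \<in> limiting_subdiff f xb" "e > 0"
  shows "\<exists>\<delta>>0. \<forall>x v. dist x xb < \<delta> \<longrightarrow> dist v vb < \<delta> \<longrightarrow>
           v \<in> limiting_subdiff f x \<longrightarrow> f x < f xb + ereal e"
proof (rule sequentially_imp_near_pair)
  fix X V assume X: "X \<longlonglongrightarrow> xb" and V: "V \<longlonglongrightarrow> vb"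
  show "\<exists>k. V k \<in> limiting_subdiff f (X k) \<longrightarrow> f (X k) < f xb + ereal e"
  proof (rule ccontr)
    assume "\<not> ?thesis"
    then have sub: "\<forall>k. V k \<in> limiting_subdiff f (X k)" and big: "\<forall>k. \<not> f (X k) < f xb + ereal e"
      by auto
    have "(\<lambda>k. f (X k)) \<longlonglongrightarrow> f xb"
      using assms(1,2) X V sub unfolding subdiff_continuous_at_def by blast
    moreover have "f xb < f xb + ereal e"
      using limiting_subdiff_finite[OF assms(2)] assms(3) by (cases "f xb") auto
    ultimately have "eventually (\<lambda>k. f (X k) < f xb + ereal e) sequentially"
      by (rule order_tendstoD)
    then show False
      using big by (auto simp: eventually_sequentially)
  qed
qed

lemma dist0_le: "c \<in> A \<Longrightarrow> dist0 A \<le> ereal (norm c)"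
  unfolding dist0_def using infdist_le[of c A 0] by auto

lemma dist0_ge:
  assumes "\<And>c. c \<in> A \<Longrightarrow> L \<le> norm c"
  shows "ereal L \<le> dist0 A"
proof (cases "A = {}")
  case False
  then have "L \<le> infdist 0 A"
    unfolding infdist_notempty[OF False] using assms by (auto intro!: cINF_greatest)
  then show ?thesis
    using False unfolding dist0_def by simp
qed (simp add: dist0_def)

section \<open>Derivatives along curves\<close>

lemma continuous_on_if_has_derivative_within:
  assumes "W \<subseteq> E" "\<And>w. w \<in> W \<Longrightarrow> (g has_derivative g' w) (at w within E)"
  shows "continuous_on W g"
proof (rule has_derivative_continuous_on)
  fix w assume "w \<in> W"
  then show "(g has_derivative g' w) (at w within W)"
    using has_derivative_subset[OF assms(2) assms(1)] by blast
qed

lemma linear_left_inverse_on_bounded: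
  fixes A :: "'a::euclidean_space \<Rightarrow> 'b::euclidean_space"
  assumes "linear A" "subspace E" "inj_on A E"
  obtains B K where "linear B" "\<And>x. B x \<in> E" "\<And>v. v \<in> E \<Longrightarrow> B (A v) = v"
    "K > 0" "\<And>x. norm (B x) \<le> K * norm x"
proof -
  obtain B where B: "range B \<subseteq> E" "linear B" "\<And>v. v \<in> E \<Longrightarrow> B (A v) = v"
    using linear_exists_left_inverse_on[OF assms] by blast
  moreover obtain K where "K > 0" "\<And>x. norm (B x) \<le> K * norm x"
    using linear_bounded_pos[OF B(2)] by blast
  ultimately show ?thesis
    using that by blast
qed

lemma has_vector_derivative_compose_within:
  assumes dF: "(F has_derivative L) (at (\<omega> 0) within E)"
    and d\<omega>: "(\<omega> has_vector_derivative a) (at 0)"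
    and d: "d > 0" and \<omega>E: "\<And>t. \<bar>t\<bar> < d \<Longrightarrow> \<omega> t \<in> E \<and> F (\<omega> t) = G t"
  shows "(G has_vector_derivative L a) (at 0)"
proof -
  have "\<omega> ` ball 0 d \<subseteq> E"
    using \<omega>E by auto
  then have "((F \<circ> \<omega>) has_derivative (L \<circ> (\<lambda>t. t *\<^sub>R a))) (at 0 within ball 0 d)"
    using d\<omega> unfolding has_vector_derivative_def
    by (intro diff_chain_within[OF has_derivative_at_withinI] has_derivative_subset[OF dF])
  then have "(G has_derivative (L \<circ> (\<lambda>t. t *\<^sub>R a))) (at 0 within ball 0 d)"
    by (rule has_derivative_transform_within[OF _ d]) (use d \<omega>E in auto)
  moreover have "L \<circ> (\<lambda>t. t *\<^sub>R a) = (\<lambda>t. t *\<^sub>R L a)"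
    using linear_scale[OF has_derivative_linear[OF dF]] by auto
  moreover have "at 0 within ball 0 d = at (0::real)"
    using d by (intro at_within_open) auto
  ultimately show ?thesis
    unfolding has_vector_derivative_def by metis
qed

lemma remainder_along_continuous_curve:
  fixes \<omega> :: "real \<Rightarrow> 'a::real_normed_vector"
  assumes d\<phi>: "(\<phi> has_derivative A) (at (\<omega> 0) within E)" and c\<omega>: "continuous (at 0) \<omega>"
    and d: "d > 0" and \<omega>E: "\<And>t. \<bar>t\<bar> < d \<Longrightarrow> \<omega> t \<in> E" and \<epsilon>: "\<epsilon> > 0"
  shows "\<exists>\<delta>>0. \<forall>t. \<bar>t\<bar> < \<delta> \<longrightarrow>
    norm (\<phi> (\<omega> t) - \<phi> (\<omega> 0) - A (\<omega> t - \<omega> 0)) \<le> \<epsilon> * norm (\<omega> t - \<omega> 0)"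
proof -
  obtain \<delta>1 where \<delta>1: "\<delta>1 > 0"
    "\<forall>w\<in>E. norm (w - \<omega> 0) < \<delta>1 \<longrightarrow> norm (\<phi> w - \<phi> (\<omega> 0) - A (w - \<omega> 0)) \<le> \<epsilon> * norm (w - \<omega> 0)"
    using d\<phi> \<epsilon> unfolding has_derivative_within_alt by blast
  obtain \<delta>2 where \<delta>2: "\<delta>2 > 0" "\<forall>t. dist t 0 < \<delta>2 \<longrightarrow> dist (\<omega> t) (\<omega> 0) < \<delta>1"
    using c\<omega> \<delta>1(1) unfolding continuous_at_eps_delta by blast
  have "norm (\<phi> (\<omega> t) - \<phi> (\<omega> 0) - A (\<omega> t - \<omega> 0)) \<le> \<epsilon> * norm (\<omega> t - \<omega> 0)"
    if "\<bar>t\<bar> < min d \<delta>2" for t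
  proof -
    have "\<omega> t \<in> E" "norm (\<omega> t - \<omega> 0) < \<delta>1"
      using \<omega>E[of t] \<delta>2(2) that by (auto simp: dist_norm)
    then show ?thesis
      using \<delta>1(2) by blast
  qed
  then show ?thesis
    using d \<delta>2(1) by (intro exI[of _ "min d \<delta>2"]) auto
qed

text \<open>The remainder R is absorbed: since it is small relative to the increment of \<omega>, that
  increment is at most twice the increment of B applied to \<gamma>.\<close>
lemma has_vector_derivative_left_inverse_remainder:
  assumes B: "linear B" "K > 0" "\<And>x. norm (B x) \<le> K * norm x" and d: "d > 0"
    and \<omega>: "\<And>t. \<bar>t\<bar> < d \<Longrightarrow> \<omega> t - \<omega> 0 = B (\<gamma> t - \<gamma> 0 - R t)"
    and R: "\<And>\<epsilon>. \<epsilon> > 0 \<Longrightarrow> \<exists>\<delta>>0. \<forall>t. \<bar>t\<bar> < \<delta> \<longrightarrow> norm (R t) \<le> \<epsilon> * norm (\<omega> t - \<omega> 0)"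
    and d\<gamma>: "(\<gamma> has_vector_derivative u) (at 0)"
  shows "(\<omega> has_vector_derivative B u) (at 0)"
  unfolding has_vector_derivative_def has_derivative_at_alt
proof (intro conjI allI impI bounded_linear_scaleR_left)
  fix \<epsilon> :: real assume "\<epsilon> > 0"
  define a where "a = B u"
  define \<kappa> where "\<kappa> = min (1 / 2) (\<epsilon> / 4 / (norm a + 1))"
  have na: "norm a + 1 > 0"
    by (simp add: add_nonneg_pos)
  have \<kappa>_pos: "\<kappa> > 0"
    using \<open>\<epsilon> > 0\<close> na by (simp add: \<kappa>_def)
  have \<kappa>_half: "\<kappa> \<le> 1 / 2"
    unfolding \<kappa>_def by (rule min.cobounded1)
  have "\<kappa> \<le> \<epsilon> / 4 / (norm a + 1)"
    by (simp add: \<kappa>_def)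
  then have "\<kappa> * norm a + \<kappa> \<le> \<epsilon> / 4"
    using na by (simp add: pos_le_divide_eq distrib_left)
  then have \<kappa>a: "\<kappa> * norm a \<le> \<epsilon> / 4"
    using \<kappa>_pos by linarith
  obtain \<delta>1 where \<delta>1: "\<delta>1 > 0" "\<forall>t. \<bar>t\<bar> < \<delta>1 \<longrightarrow> norm (R t) \<le> \<kappa> / K * norm (\<omega> t - \<omega> 0)"
    using R[of "\<kappa> / K"] \<kappa>_pos B(2) by auto
  have "\<exists>\<delta>>0. \<forall>t. \<bar>t\<bar> < \<delta> \<longrightarrow> norm (\<gamma> t - \<gamma> 0 - t *\<^sub>R u) \<le> \<epsilon> / (4 * K) * \<bar>t\<bar>"
    using d\<gamma> divide_pos_pos[OF \<open>\<epsilon> > 0\<close>, of "4 * K"] B(2)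
    unfolding has_vector_derivative_def has_derivative_at_alt by fastforce
  then obtain \<delta>2 where \<delta>2: "\<delta>2 > 0"
    "\<forall>t. \<bar>t\<bar> < \<delta>2 \<longrightarrow> norm (\<gamma> t - \<gamma> 0 - t *\<^sub>R u) \<le> \<epsilon> / (4 * K) * \<bar>t\<bar>"
    by blast
  have "norm (\<omega> t - \<omega> 0 - t *\<^sub>R a) \<le> \<epsilon> * \<bar>t\<bar>" if t: "\<bar>t\<bar> < min d (min \<delta>1 \<delta>2)" for t
  proof -
    define D where "D = \<omega> t - \<omega> 0 - t *\<^sub>R a"
    have "D = B (\<gamma> t - \<gamma> 0 - t *\<^sub>R u) - B (R t)"
      using \<omega>[of t] t by (simp add: D_def a_def linear_diff[OF B(1)] linear_scale[OF B(1)])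
    then have "norm D \<le> norm (B (\<gamma> t - \<gamma> 0 - t *\<^sub>R u)) + norm (B (R t))"
      by (simp add: norm_triangle_ineq4)
    also have "\<dots> \<le> K * norm (\<gamma> t - \<gamma> 0 - t *\<^sub>R u) + K * norm (R t)"
      by (intro add_mono B(3))
    finally have n1: "norm D \<le> K * norm (\<gamma> t - \<gamma> 0 - t *\<^sub>R u) + K * norm (R t)" .
    have n2: "K * norm (\<gamma> t - \<gamma> 0 - t *\<^sub>R u) \<le> \<epsilon> / 4 * \<bar>t\<bar>"
      using mult_left_mono[OF \<delta>2(2)[rule_format, of t], of K] t B(2) by simp
    have "K * norm (R t) \<le> \<kappa> * norm (\<omega> t - \<omega> 0)"
      using mult_left_mono[OF \<delta>1(2)[rule_format, of t], of K] t B(2) by simp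
    also have "\<dots> \<le> \<kappa> * (norm D + \<bar>t\<bar> * norm a)"
      using \<kappa>_pos unfolding D_def
      by (intro mult_left_mono) (metis norm_scaleR norm_triangle_sub add.commute, simp)
    finally have n3: "K * norm (R t) \<le> \<kappa> * norm D + \<kappa> * norm a * \<bar>t\<bar>"
      by (simp add: algebra_simps)
    have "\<kappa> * norm D \<le> 1 / 2 * norm D" "\<kappa> * norm a * \<bar>t\<bar> \<le> \<epsilon> / 4 * \<bar>t\<bar>"
      using mult_right_mono[OF \<kappa>_half, of "norm D"] mult_right_mono[OF \<kappa>a, of "\<bar>t\<bar>"] by simp_all
    with n1 n2 n3 show ?thesis
      unfolding D_def by linarith
  qed
  then show "\<exists>\<delta>>0. \<forall>t. norm (t - 0) < \<delta> \<longrightarrow> norm (\<omega> t - \<omega> 0 - (t - 0) *\<^sub>R B u) \<le> \<epsilon> * norm (t - 0)"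
    using d \<delta>1(1) \<delta>2(1) unfolding a_def by (intro exI[of _ "min d (min \<delta>1 \<delta>2)"]) auto
qed

lemma vector_derivative_lift:
  fixes \<phi> :: "'a::euclidean_space \<Rightarrow> 'b::euclidean_space"
  assumes E: "subspace E" and d\<phi>: "(\<phi> has_derivative A) (at (\<omega> 0) within E)" and inj: "inj_on A E"
    and c\<omega>: "continuous (at 0) \<omega>" and d: "d > 0"
    and \<omega>\<gamma>: "\<And>t. \<bar>t\<bar> < d \<Longrightarrow> \<omega> t \<in> E \<and> \<phi> (\<omega> t) = \<gamma> t"
    and d\<gamma>: "(\<gamma> has_vector_derivative u) (at 0)"
  obtains a where "a \<in> E" "u = A a" "(\<omega> has_vector_derivative a) (at 0)"
proof -
  obtain B K where B: "linear B" "\<And>x. B x \<in> E" "\<And>v. v \<in> E \<Longrightarrow> B (A v) = v"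
    and K: "K > 0" "\<And>x. norm (B x) \<le> K * norm x"
    by (rule linear_left_inverse_on_bounded[OF has_derivative_linear[OF d\<phi>] E inj]) (rule that)
  define R where "R t = \<phi> (\<omega> t) - \<phi> (\<omega> 0) - A (\<omega> t - \<omega> 0)" for t
  have "\<omega> t - \<omega> 0 = B (\<gamma> t - \<gamma> 0 - R t)" if "\<bar>t\<bar> < d" for t
    using B(3)[of "\<omega> t - \<omega> 0"] \<omega>\<gamma>[OF that] \<omega>\<gamma>[of 0] d E by (simp add: R_def subspace_diff)
  moreover have "\<exists>\<delta>>0. \<forall>t. \<bar>t\<bar> < \<delta> \<longrightarrow> norm (R t) \<le> \<epsilon> * norm (\<omega> t - \<omega> 0)" if "\<epsilon> > 0" for \<epsilon>
    unfolding R_def using \<omega>\<gamma> by (intro remainder_along_continuous_curve[OF d\<phi> c\<omega> d _ that]) blast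
  ultimately have d\<omega>: "(\<omega> has_vector_derivative B u) (at 0)"
    by (rule has_vector_derivative_left_inverse_remainder[OF B(1) K(1,2) d _ _ d\<gamma>])
  have "u = A (B u)"
    using vector_derivative_unique_at[OF d\<gamma> has_vector_derivative_compose_within[OF d\<phi> d\<omega> d \<omega>\<gamma>]] .
  then show ?thesis
    using that B(2) d\<omega> by blast
qed

lemma has_real_derivative_norm_diff_sq:
  assumes "(\<gamma> has_vector_derivative u) (at 0)"
  shows "((\<lambda>t. (norm (\<gamma> t - z))\<^sup>2) has_real_derivative 2 * inner (\<gamma> 0 - z) u) (at 0)"
proof -
  have d: "((\<lambda>t. \<gamma> t - z) has_derivative (\<lambda>h. h *\<^sub>R u)) (at 0)"
    using assms unfolding has_vector_derivative_def by (auto intro!: derivative_eq_intros)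
  have "((\<lambda>t. inner (\<gamma> t - z) (\<gamma> t - z)) has_derivative
      (\<lambda>h. inner (\<gamma> 0 - z) (h *\<^sub>R u) + inner (h *\<^sub>R u) (\<gamma> 0 - z))) (at 0)"
    by (rule has_derivative_inner[OF d d])
  moreover have "(\<lambda>h. inner (\<gamma> 0 - z) (h *\<^sub>R u) + inner (h *\<^sub>R u) (\<gamma> 0 - z)) = (*) (2 * inner (\<gamma> 0 - z) u)"
    by (auto simp: inner_commute algebra_simps)
  ultimately show ?thesis
    unfolding has_field_derivative_def by (simp add: power2_norm_eq_inner)
qed

lemma curve_in_reflect:
  assumes "curve_in M y \<gamma> u"
  shows "curve_in M y (\<lambda>t. \<gamma> (- t)) (- u)"
proof -
  have "((\<gamma> \<circ> uminus) has_vector_derivative (-1) *\<^sub>R u) (at 0)"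
    using assms unfolding curve_in_def
    by (intro vector_diff_chain_at) (auto intro!: derivative_eq_intros)
  then show ?thesis
    using assms unfolding curve_in_def by (force simp: o_def)
qed

section \<open>Charts\<close>

definition chart :: "'a::euclidean_space set \<Rightarrow> 'a set \<Rightarrow> 'a set \<Rightarrow> 'a set \<Rightarrow> ('a \<Rightarrow> 'a) \<Rightarrow> ('a \<Rightarrow> 'a \<Rightarrow> 'a) \<Rightarrow> bool" where
  "chart M E U W \<phi> \<phi>' \<longleftrightarrow> subspace E \<and> open U \<and> openin (top_of_set E) W \<and>
     \<phi> ` W = M \<inter> U \<and> inj_on \<phi> W \<and> continuous_on (M \<inter> U) (inv_into W \<phi>) \<and>
     (\<forall>w\<in>W. (\<phi> has_derivative \<phi>' w) (at w within E) \<and> inj_on (\<phi>' w) E) \<and>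
     (\<forall>u\<in>E. continuous_on W (\<lambda>z. \<phi>' z u))"

lemma local_param_chart:
  assumes "local_param M E U W \<phi>"
  obtains \<phi>' where "chart M E U W \<phi> \<phi>'"
  using assms unfolding local_param_def chart_def by blast

lemma chart_domain_subset: "chart M E U W \<phi> \<phi>' \<Longrightarrow> W \<subseteq> E"
  unfolding chart_def openin_contains_ball by blast

lemma chart_derivative_tangent:
  assumes ch: "chart M E U W \<phi> \<phi>'" and w: "w \<in> W" and a: "a \<in> E"
  shows "\<phi>' w a \<in> tangent_space M (\<phi> w)"
proof -
  have E: "subspace E" and img: "\<phi> ` W = M \<inter> U" and d\<phi>: "(\<phi> has_derivative \<phi>' w) (at w within E)"
    using ch w unfolding chart_def by auto
  obtain e where e: "e > 0" "ball w e \<inter> E \<subseteq> W"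
    using ch w unfolding chart_def openin_contains_ball by blast
  define \<omega> where "\<omega> t = w + t *\<^sub>R a" for t :: real
  have \<omega>E: "\<omega> t \<in> E" for t
    using E chart_domain_subset[OF ch] w a by (auto simp: \<omega>_def intro: subspace_add subspace_scale)
  define d where "d = e / (norm a + 1)"
  have d: "d > 0"
    using e(1) by (simp add: d_def add_nonneg_pos)
  have \<omega>W: "\<omega> t \<in> W" if "\<bar>t\<bar> < d" for t
  proof -
    have "\<bar>t\<bar> * norm a \<le> \<bar>t\<bar> * (norm a + 1)"
      by (simp add: mult_left_mono)
    also have "\<dots> < e"
      using that by (simp add: d_def pos_less_divide_eq add_nonneg_pos)
    finally show ?thesis
      using e(2) \<omega>E by (auto simp: \<omega>_def dist_norm)
  qed
  have d\<omega>: "(\<omega> has_vector_derivative a) (at 0)"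
    unfolding \<omega>_def by (auto intro!: derivative_eq_intros)
  have d\<phi>': "(\<phi> has_derivative \<phi>' w) (at (\<omega> 0) within E)"
    using d\<phi> by (simp add: \<omega>_def)
  have "((\<lambda>t. \<phi> (\<omega> t)) has_vector_derivative \<phi>' w a) (at 0)"
    by (rule has_vector_derivative_compose_within[OF d\<phi>' d\<omega> d]) (use \<omega>E in auto)
  then have "curve_in M (\<phi> w) (\<lambda>t. \<phi> (\<omega> t)) (\<phi>' w a)"
    unfolding curve_in_def using d \<omega>W img by (auto simp: \<omega>_def intro!: exI[of _ d])
  then show ?thesis
    unfolding tangent_space_def by blast
qed

lemma chart_lift_curve:
  assumes ch: "chart M E U W \<phi> \<phi>'" and w0: "w0 \<in> W" and \<gamma>: "curve_in M (\<phi> w0) \<gamma> u"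
  obtains a \<omega> d where "a \<in> E" "u = \<phi>' w0 a" "d > 0" "\<And>t. \<bar>t\<bar> < d \<Longrightarrow> \<omega> t \<in> W \<and> \<phi> (\<omega> t) = \<gamma> t"
    "\<omega> 0 = w0" "(\<omega> has_vector_derivative a) (at 0)"
proof -
  have E: "subspace E" and oU: "open U" and img: "\<phi> ` W = M \<inter> U" and inj: "inj_on \<phi> W"
    and cinv: "continuous_on (M \<inter> U) (inv_into W \<phi>)"
    and d\<phi>: "(\<phi> has_derivative \<phi>' w0) (at w0 within E)" and inj': "inj_on (\<phi>' w0) E"
    using ch w0 unfolding chart_def by auto
  obtain e where e: "e > 0" "\<And>t. \<bar>t\<bar> < e \<Longrightarrow> \<gamma> t \<in> M"
    and \<gamma>0: "\<gamma> 0 = \<phi> w0" and d\<gamma>: "(\<gamma> has_vector_derivative u) (at 0)"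
    using \<gamma> unfolding curve_in_def by blast
  have c\<gamma>: "continuous (at 0) \<gamma>"
    using d\<gamma> by (rule has_vector_derivative_continuous)
  obtain r where r: "r > 0" "ball (\<phi> w0) r \<subseteq> U"
    using oU img w0 open_contains_ball by blast
  obtain d1 where d1: "d1 > 0" "\<And>t. dist t 0 < d1 \<Longrightarrow> dist (\<gamma> t) (\<gamma> 0) < r"
    using c\<gamma> r(1) unfolding continuous_at_eps_delta by blast
  define d where "d = min e d1"
  have d: "d > 0"
    using e(1) d1(1) by (simp add: d_def)
  have MU: "\<gamma> t \<in> M \<inter> U" if "\<bar>t\<bar> < d" for t
    using e(2)[of t] d1(2)[of t] r(2) that \<gamma>0 by (auto simp: d_def dist_commute subset_iff)
  define \<omega> where "\<omega> t = inv_into W \<phi> (\<gamma> t)" for t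
  have \<omega>W: "\<omega> t \<in> W \<and> \<phi> (\<omega> t) = \<gamma> t" if "\<bar>t\<bar> < d" for t
    using MU[OF that] img unfolding \<omega>_def by (auto intro: inv_into_into f_inv_into_f)
  have \<omega>0: "\<omega> 0 = w0"
    using inj w0 \<gamma>0 by (simp add: \<omega>_def inv_into_f_f)
  have "eventually (\<lambda>t. \<gamma> t \<in> M \<inter> U) (at 0)"
    using MU d by (auto simp: eventually_at intro!: exI[of _ d])
  then have "(\<omega> \<longlongrightarrow> inv_into W \<phi> (\<gamma> 0)) (at 0)"
    unfolding \<omega>_def using c\<gamma> MU[of 0] d
    by (intro continuous_on_tendsto_compose[OF cinv]) (auto simp: continuous_at)
  then have c\<omega>: "continuous (at 0) \<omega>"
    by (simp add: continuous_at \<omega>_def)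
  have \<omega>E: "\<omega> t \<in> E \<and> \<phi> (\<omega> t) = \<gamma> t" if "\<bar>t\<bar> < d" for t
    using \<omega>W[OF that] chart_domain_subset[OF ch] by auto
  have d\<phi>': "(\<phi> has_derivative \<phi>' w0) (at (\<omega> 0) within E)"
    using d\<phi> \<omega>0 by simp
  obtain a where "a \<in> E" "u = \<phi>' w0 a" "(\<omega> has_vector_derivative a) (at 0)"
    using vector_derivative_lift[OF E d\<phi>' inj' c\<omega> d \<omega>E d\<gamma>] by blast
  then show ?thesis
    using that d \<omega>W \<omega>0 by blast
qed

lemma chart_tangent_space:
  assumes ch: "chart M E U W \<phi> \<phi>'" and w: "w \<in> W"
  shows "tangent_space M (\<phi> w) = \<phi>' w ` E"
proof (intro equalityI subsetI)
  fix u assume "u \<in> tangent_space M (\<phi> w)"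
  then obtain \<gamma> where "curve_in M (\<phi> w) \<gamma> u"
    unfolding tangent_space_def by blast
  then show "u \<in> \<phi>' w ` E"
    using chart_lift_curve[OF ch w] by (metis image_eqI)
qed (use chart_derivative_tangent[OF ch w] in blast)

lemma chart_normal_space_limit:
  assumes ch: "chart M E U W \<phi> \<phi>'" and wb: "wb \<in> W"
    and Y: "\<And>k. Y k \<in> M" "Y \<longlonglongrightarrow> \<phi> wb"
    and D: "\<And>k. D k \<in> normal_space M (Y k)" "D \<longlonglongrightarrow> d"
  shows "d \<in> normal_space M (\<phi> wb)"
  unfolding normal_space_def
proof (intro CollectI ballI)
  fix u assume "u \<in> tangent_space M (\<phi> wb)"
  then obtain a where a: "a \<in> E" "u = \<phi>' wb a"
    using chart_tangent_space[OF ch wb] by auto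
  have oU: "open U" and img: "\<phi> ` W = M \<inter> U" and inj: "inj_on \<phi> W"
    and cinv: "continuous_on (M \<inter> U) (inv_into W \<phi>)" and ca: "continuous_on W (\<lambda>z. \<phi>' z a)"
    using ch a unfolding chart_def by auto
  have "eventually (\<lambda>k. Y k \<in> U) sequentially"
    using topological_tendstoD[OF Y(2) oU] img wb by auto
  then have evMU: "eventually (\<lambda>k. Y k \<in> M \<inter> U) sequentially"
    using Y(1) by (auto elim: eventually_mono)
  define w where "w k = inv_into W \<phi> (Y k)" for k
  have "w \<longlonglongrightarrow> inv_into W \<phi> (\<phi> wb)"
    unfolding w_def using img wb by (intro continuous_on_tendsto_compose[OF cinv Y(2) _ evMU]) auto
  then have wlim: "w \<longlonglongrightarrow> wb"
    using inj wb by (simp add: inv_into_f_f)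
  have evW: "eventually (\<lambda>k. w k \<in> W \<and> \<phi> (w k) = Y k) sequentially"
    using evMU by (rule eventually_mono) (use img in \<open>auto simp: w_def intro: inv_into_into f_inv_into_f\<close>)
  have lim: "(\<lambda>k. inner (D k) (\<phi>' (w k) a)) \<longlonglongrightarrow> inner d u"
    unfolding a(2) using evW
    by (intro tendsto_inner D(2) continuous_on_tendsto_compose[OF ca wlim wb])
      (use evW in \<open>simp add: eventually_mono\<close>)
  have "eventually (\<lambda>k. inner (D k) (\<phi>' (w k) a) = 0) sequentially"
    using evW
  proof eventually_elim
    case (elim k)
    then have "\<phi>' (w k) a \<in> tangent_space M (Y k)"
      using chart_derivative_tangent[OF ch _ a(1)] by metis
    then show ?case
      using D(1)[of k] unfolding normal_space_def by blast
  qed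
  then have "(\<lambda>k. inner (D k) (\<phi>' (w k) a)) \<longlonglongrightarrow> 0"
    by (rule tendsto_eventually)
  with lim show "inner d u = 0"
    by (rule LIMSEQ_unique)
qed

lemma chart_locally_compact:
  assumes ch: "chart M E U W \<phi> \<phi>'" and wb: "wb \<in> W"
  obtains \<rho> where "\<rho> > 0" "compact (M \<inter> cball (\<phi> wb) \<rho>)"
proof -
  have E: "subspace E" and oU: "open U" and img: "\<phi> ` W = M \<inter> U" and inj: "inj_on \<phi> W"
    and cinv: "continuous_on (M \<inter> U) (inv_into W \<phi>)" and oW: "openin (top_of_set E) W"
    and d\<phi>: "\<And>w. w \<in> W \<Longrightarrow> (\<phi> has_derivative \<phi>' w) (at w within E)"
    using ch unfolding chart_def by auto
  have c\<phi>: "continuous_on W \<phi>"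
    by (rule continuous_on_if_has_derivative_within[OF chart_domain_subset[OF ch] d\<phi>])
  obtain r where r: "r > 0" "ball wb r \<inter> E \<subseteq> W"
    using oW wb unfolding openin_contains_ball by blast
  define K where "K = cball wb (r / 2) \<inter> E"
  have K: "compact K" "K \<subseteq> W"
    using r closed_subspace[OF E] unfolding K_def by (auto intro: compact_Int_closed)
  have xU: "\<phi> wb \<in> M \<inter> U"
    using img wb by auto
  obtain \<rho>a where \<rho>a: "\<rho>a > 0"
    "\<And>y. y \<in> M \<inter> U \<Longrightarrow> dist y (\<phi> wb) < \<rho>a \<Longrightarrow> dist (inv_into W \<phi> y) (inv_into W \<phi> (\<phi> wb)) < r / 2"
    using cinv xU r(1) unfolding continuous_on_iff by (meson half_gt_zero)
  obtain \<rho>b where \<rho>b: "\<rho>b > 0" "ball (\<phi> wb) \<rho>b \<subseteq> U"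
    using oU xU open_contains_ball by blast
  define \<rho> where "\<rho> = min \<rho>a \<rho>b / 2"
  have "M \<inter> cball (\<phi> wb) \<rho> \<subseteq> \<phi> ` K"
  proof
    fix y assume y: "y \<in> M \<inter> cball (\<phi> wb) \<rho>"
    then have yMU: "y \<in> M \<inter> U" and "dist y (\<phi> wb) < \<rho>a"
      using \<rho>a(1) \<rho>b unfolding \<rho>_def by (auto simp: dist_commute subset_iff)
    then have "dist (inv_into W \<phi> y) wb < r / 2"
      using \<rho>a(2) inv_into_f_f[OF inj wb] by simp
    moreover have "inv_into W \<phi> y \<in> W" "\<phi> (inv_into W \<phi> y) = y"
      using yMU img by (auto intro: inv_into_into f_inv_into_f)
    ultimately have "inv_into W \<phi> y \<in> K"
      using chart_domain_subset[OF ch] unfolding K_def by (auto simp: dist_commute)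
    then show "y \<in> \<phi> ` K"
      using \<open>\<phi> (inv_into W \<phi> y) = y\<close> by (metis imageI)
  qed
  then have "M \<inter> cball (\<phi> wb) \<rho> = \<phi> ` K \<inter> cball (\<phi> wb) \<rho>"
    using K(2) img by auto
  moreover have "compact (\<phi> ` K \<inter> cball (\<phi> wb) \<rho>)"
    using compact_continuous_image[OF continuous_on_subset[OF c\<phi> K(2)] K(1)]
    by (intro compact_Int_closed) auto
  moreover have "\<rho> > 0"
    using \<rho>a(1) \<rho>b(1) by (simp add: \<rho>_def)
  ultimately show ?thesis
    using that[of \<rho>] by simp
qed

lemma restricted_C1_chart:
  assumes "restricted_C1 f M y" "y \<in> M"
  obtains E U W \<phi> \<phi>' F' w0 where "chart M E U W \<phi> \<phi>'" "w0 \<in> W" "\<phi> w0 = y"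
    "\<And>w. w \<in> W \<Longrightarrow> \<bar>f (\<phi> w)\<bar> \<noteq> \<infinity>"
    "\<And>w. w \<in> W \<Longrightarrow> ((\<lambda>w. real_of_ereal (f (\<phi> w))) has_derivative F' w) (at w within E)"
proof -
  obtain E U W \<phi> where c: "y \<in> U" "local_param M E U W \<phi>"
      "\<forall>w\<in>W. \<bar>f (\<phi> w)\<bar> \<noteq> \<infinity>" "C1_within E W (\<lambda>w. real_of_ereal (f (\<phi> w)))"
    using assms unfolding restricted_C1_def by (metis IntI centre_in_ball)
  obtain \<phi>' where ch: "chart M E U W \<phi> \<phi>'"
    using local_param_chart[OF c(2)] by blast
  obtain F' where F': "\<forall>w\<in>W. ((\<lambda>w. real_of_ereal (f (\<phi> w))) has_derivative F' w) (at w within E)"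
    using c(4) unfolding C1_within_def by blast
  obtain w0 where w0: "w0 \<in> W" "\<phi> w0 = y"
    using ch c(1) assms(2) unfolding chart_def by (metis IntI imageE)
  show ?thesis
    by (rule that[OF ch w0]) (use c(3) F' in auto)
qed

lemma restricted_C1_continuous_on:
  assumes "restricted_C1 f M y" "y \<in> M"
  obtains r where "r > 0" "continuous_on (M \<inter> ball y r) (\<lambda>x. real_of_ereal (f x))"
    "\<And>x. x \<in> M \<inter> ball y r \<Longrightarrow> \<bar>f x\<bar> \<noteq> \<infinity>"
proof -
  obtain E U W \<phi> \<phi>' F' w0 where ch: "chart M E U W \<phi> \<phi>'" and w0: "w0 \<in> W" "\<phi> w0 = y"
    and fin: "\<And>w. w \<in> W \<Longrightarrow> \<bar>f (\<phi> w)\<bar> \<noteq> \<infinity>"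
    and dF: "\<And>w. w \<in> W \<Longrightarrow> ((\<lambda>w. real_of_ereal (f (\<phi> w))) has_derivative F' w) (at w within E)"
    by (rule restricted_C1_chart[OF assms]) (rule that)
  have oU: "open U" and img: "\<phi> ` W = M \<inter> U" and cinv: "continuous_on (M \<inter> U) (inv_into W \<phi>)"
    using ch unfolding chart_def by auto
  have inv: "inv_into W \<phi> x \<in> W" "\<phi> (inv_into W \<phi> x) = x" if "x \<in> M \<inter> U" for x
    using that img by (auto intro: inv_into_into f_inv_into_f)
  have "continuous_on W (\<lambda>w. real_of_ereal (f (\<phi> w)))"
    by (rule continuous_on_if_has_derivative_within[OF chart_domain_subset[OF ch] dF])
  then have "continuous_on (M \<inter> U) ((\<lambda>w. real_of_ereal (f (\<phi> w))) \<circ> inv_into W \<phi>)"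
    using inv by (intro continuous_on_compose cinv) (auto intro: continuous_on_subset)
  then have cont: "continuous_on (M \<inter> U) (\<lambda>x. real_of_ereal (f x))"
    by (rule continuous_on_cong[THEN iffD1, rotated 2]) (use inv in auto)
  obtain r where r: "r > 0" "ball y r \<subseteq> U"
    using oU img w0 open_contains_ball by blast
  have "continuous_on (M \<inter> ball y r) (\<lambda>x. real_of_ereal (f x))"
    using r(2) by (intro continuous_on_subset[OF cont]) auto
  moreover have "\<bar>f x\<bar> \<noteq> \<infinity>" if "x \<in> M \<inter> ball y r" for x
  proof -
    have "x \<in> M \<inter> U"
      using that r(2) by auto
    then show ?thesis
      using fin[OF inv(1)] inv(2) by metis
  qed
  ultimately show ?thesis
    using that r(1) by blast
qed

lemma restricted_C1_compact_nbhd: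
  assumes rC: "restricted_C1 f M y" and yM: "y \<in> M"
  obtains \<rho> where "\<rho> > 0" "\<And>r. r \<le> \<rho> \<Longrightarrow> compact (M \<inter> cball y r)"
    "continuous_on (M \<inter> cball y \<rho>) (\<lambda>x. real_of_ereal (f x))"
    "\<And>x. x \<in> M \<inter> cball y \<rho> \<Longrightarrow> \<bar>f x\<bar> \<noteq> \<infinity>"
proof -
  obtain rc where rc: "rc > 0" "continuous_on (M \<inter> ball y rc) (\<lambda>x. real_of_ereal (f x))"
    "\<And>x. x \<in> M \<inter> ball y rc \<Longrightarrow> \<bar>f x\<bar> \<noteq> \<infinity>"
    by (rule restricted_C1_continuous_on[OF rC yM]) (rule that)
  obtain E U W \<phi> \<phi>' w where ch: "chart M E U W \<phi> \<phi>'" and w: "w \<in> W" "\<phi> w = y"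
    by (rule restricted_C1_chart[OF rC yM]) (rule that)
  obtain \<rho>K where \<rho>K: "\<rho>K > 0" "compact (M \<inter> cball (\<phi> w) \<rho>K)"
    by (rule chart_locally_compact[OF ch w(1)]) (rule that)
  define \<rho> where "\<rho> = min (rc / 2) \<rho>K"
  have sub: "M \<inter> cball y \<rho> \<subseteq> M \<inter> ball y rc"
    using rc(1) by (auto simp: \<rho>_def)
  show ?thesis
  proof (rule that)
    show "\<rho> > 0"
      using rc(1) \<rho>K(1) by (simp add: \<rho>_def)
    show "compact (M \<inter> cball y r)" if "r \<le> \<rho>" for r
    proof -
      have "r \<le> \<rho>K"
        using that by (simp add: \<rho>_def)
      then have "M \<inter> cball y r = (M \<inter> cball (\<phi> w) \<rho>K) \<inter> cball y r"
        using w(2) by auto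
      then show ?thesis
        using \<rho>K(2) by (simp add: compact_Int_closed)
    qed
    show "continuous_on (M \<inter> cball y \<rho>) (\<lambda>x. real_of_ereal (f x))"
      by (rule continuous_on_subset[OF rc(2) sub])
    show "\<bar>f x\<bar> \<noteq> \<infinity>" if "x \<in> M \<inter> cball y \<rho>" for x
      using that sub by (intro rc(3)) auto
  qed
qed

lemma restricted_C1_curve_finite:
  assumes "restricted_C1 f M y" "y \<in> M" "curve_in M y \<gamma> u"
  shows "eventually (\<lambda>t. \<bar>f (\<gamma> t)\<bar> \<noteq> \<infinity>) (at 0)"
proof -
  obtain E U W \<phi> \<phi>' w0 where ch: "chart M E U W \<phi> \<phi>'" and w0: "w0 \<in> W" "\<phi> w0 = y"
    and fin: "\<And>w. w \<in> W \<Longrightarrow> \<bar>f (\<phi> w)\<bar> \<noteq> \<infinity>"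
    by (rule restricted_C1_chart[OF assms(1,2)]) (rule that)
  obtain \<omega> d where d: "d > 0" and \<omega>: "\<And>t. \<bar>t\<bar> < d \<Longrightarrow> \<omega> t \<in> W \<and> \<phi> (\<omega> t) = \<gamma> t"
    by (rule chart_lift_curve[OF ch w0(1) assms(3)[folded w0(2)]]) (rule that)
  have "\<bar>f (\<gamma> t)\<bar> \<noteq> \<infinity>" if "\<bar>t\<bar> < d" for t
    using fin \<omega>[OF that] by metis
  then show ?thesis
    using d unfolding eventually_at dist_real_def by (metis diff_zero)
qed

section \<open>The Riemannian gradient\<close>

lemma subspace_riesz_representer:
  fixes L :: "'a::euclidean_space \<Rightarrow> real"
  assumes "subspace V" "linear L"
  obtains g where "g \<in> V" "\<And>v. v \<in> V \<Longrightarrow> inner g v = L v"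
proof -
  obtain g z where gz: "g \<in> span V" "\<And>w. w \<in> span V \<Longrightarrow> orthogonal z w" "adjoint L 1 = g + z"
    using orthogonal_subspace_decomp_exists[of V "adjoint L 1"] by blast
  have "inner g v = L v" if "v \<in> V" for v
  proof -
    have "L v = inner v (adjoint L 1)"
      using adjoint_works[OF assms(2), of v 1] by simp
    then show ?thesis
      using gz(2)[of v] that unfolding gz(3) orthogonal_def
      by (simp add: span_base inner_add_right inner_commute)
  qed
  moreover have "g \<in> V"
    using gz(1) assms(1) by (metis span_eq_iff)
  ultimately show ?thesis
    using that by blast
qed

lemma restricted_C1_gradient_exists:
  assumes "restricted_C1 f M y" "y \<in> M"
  obtains g where "g \<in> tangent_space M y"
    "\<And>\<gamma> u. curve_in M y \<gamma> u \<Longrightarrow> ((\<lambda>t. real_of_ereal (f (\<gamma> t))) has_real_derivative inner g u) (at 0)"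
proof -
  obtain E U W \<phi> \<phi>' F' w0 where ch: "chart M E U W \<phi> \<phi>'" and w0: "w0 \<in> W" "\<phi> w0 = y"
    and dF: "\<And>w. w \<in> W \<Longrightarrow> ((\<lambda>w. real_of_ereal (f (\<phi> w))) has_derivative F' w) (at w within E)"
    by (rule restricted_C1_chart[OF assms]) (rule that)
  have E: "subspace E" and d\<phi>: "(\<phi> has_derivative \<phi>' w0) (at w0 within E)" and inj: "inj_on (\<phi>' w0) E"
    using ch w0(1) unfolding chart_def by auto
  obtain B where B: "linear B" "\<And>v. v \<in> E \<Longrightarrow> B (\<phi>' w0 v) = v"
    by (rule linear_left_inverse_on_bounded[OF has_derivative_linear[OF d\<phi>] E inj]) (rule that)
  have "subspace (\<phi>' w0 ` E)"
    by (rule linear_subspace_image[OF has_derivative_linear[OF d\<phi>] E])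
  moreover have "linear (F' w0 \<circ> B)"
    by (rule linear_compose[OF B(1) has_derivative_linear[OF dF[OF w0(1)]]])
  ultimately obtain g where g: "g \<in> \<phi>' w0 ` E" "\<And>v. v \<in> \<phi>' w0 ` E \<Longrightarrow> inner g v = (F' w0 \<circ> B) v"
    using subspace_riesz_representer by blast
  have "((\<lambda>t. real_of_ereal (f (\<gamma> t))) has_real_derivative inner g u) (at 0)"
    if \<gamma>: "curve_in M y \<gamma> u" for \<gamma> u
  proof -
    obtain a \<omega> d where a: "a \<in> E" "u = \<phi>' w0 a" and d: "d > 0"
      and \<omega>: "\<And>t. \<bar>t\<bar> < d \<Longrightarrow> \<omega> t \<in> W \<and> \<phi> (\<omega> t) = \<gamma> t"
      and \<omega>0: "\<omega> 0 = w0" and d\<omega>: "(\<omega> has_vector_derivative a) (at 0)"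
      by (rule chart_lift_curve[OF ch w0(1) \<gamma>[folded w0(2)]]) (rule that)
    have "((\<lambda>t. real_of_ereal (f (\<gamma> t))) has_vector_derivative F' w0 a) (at 0)"
      by (rule has_vector_derivative_compose_within[of "\<lambda>w. real_of_ereal (f (\<phi> w))" "F' w0" \<omega> E a d])
        (use dF[OF w0(1)] \<omega>0 d\<omega> d \<omega> chart_domain_subset[OF ch] in auto)
    moreover have "F' w0 a = inner g u"
      using g(2)[of u] a B(2) by auto
    ultimately show ?thesis
      by (simp add: has_real_derivative_iff_has_vector_derivative)
  qed
  then show ?thesis
    using that g(1) chart_tangent_space[OF ch w0(1)] w0(2) by blast
qed

lemma riem_grad_eqI:
  assumes "g \<in> tangent_space M y"
    and "\<And>\<gamma> u. curve_in M y \<gamma> u \<Longrightarrow> ((\<lambda>t. real_of_ereal (f (\<gamma> t))) has_real_derivative inner g u) (at 0)"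
  shows "riem_grad f M y = g"
  unfolding riem_grad_def
proof (rule the_equality)
  fix v assume v: "v \<in> tangent_space M y \<and> (\<forall>\<gamma> u. curve_in M y \<gamma> u \<longrightarrow>
      ((\<lambda>t. real_of_ereal (f (\<gamma> t))) has_real_derivative inner v u) (at 0))"
  have eq: "inner v u = inner g u" if u: "u \<in> tangent_space M y" for u
  proof -
    obtain \<gamma> where "curve_in M y \<gamma> u"
      using u unfolding tangent_space_def by blast
    then show ?thesis
      using v assms(2) DERIV_unique by blast
  qed
  have "inner (v - g) (v - g) = 0"
    using eq[of v] eq[of g] v assms(1) by (simp add: inner_diff_left inner_diff_right inner_commute)
  then show "v = g"
    by simp
qed (use assms in blast)

lemma
  assumes "restricted_C1 f M y" "y \<in> M"
  shows riem_grad_in_tangent_space: "riem_grad f M y \<in> tangent_space M y"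
    and has_real_derivative_riem_grad: "curve_in M y \<gamma> u \<Longrightarrow>
      ((\<lambda>t. real_of_ereal (f (\<gamma> t))) has_real_derivative inner (riem_grad f M y) u) (at 0)"
  using restricted_C1_gradient_exists[OF assms] riem_grad_eqI by metis+

lemma frechet_curve_step_estimate:
  fixes v u g y :: "'a::real_inner"
  assumes t: "t > 0" and \<epsilon>: "0 < \<epsilon>" "\<epsilon> \<le> 1"
    and q: "q - q0 \<le> D * t + \<epsilon> * t"
    and frechet: "q0 + inner v (g - y) - \<epsilon> * norm (g - y) \<le> q"
    and g: "norm (g - y - t *\<^sub>R u) \<le> \<epsilon> * t"
  shows "inner v u \<le> D + \<epsilon> * (2 + norm v + norm u)"
proof -
  have "\<bar>inner v (g - y - t *\<^sub>R u)\<bar> \<le> norm v * (\<epsilon> * t)"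
    using Cauchy_Schwarz_ineq2[of v "g - y - t *\<^sub>R u"] g by (meson norm_ge_zero mult_left_mono order_trans)
  then have "t * inner v u - norm v * (\<epsilon> * t) \<le> inner v (g - y)"
    by (simp add: inner_diff_right)
  moreover have "norm (g - y) \<le> t * norm u + \<epsilon> * t"
    using norm_triangle_ineq[of "g - y - t *\<^sub>R u" "t *\<^sub>R u"] t g by simp
  then have "\<epsilon> * norm (g - y) \<le> \<epsilon> * (t * norm u) + \<epsilon> * (\<epsilon> * t)"
    using \<epsilon>(1) by (simp add: mult_left_mono flip: distrib_left)
  moreover have "\<epsilon> * (\<epsilon> * t) \<le> \<epsilon> * t"
    using \<epsilon> t by (simp add: mult_left_le_one_le)
  ultimately have "t * (inner v u - D) \<le> t * (\<epsilon> * (2 + norm v + norm u))"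
    using q frechet by (simp add: algebra_simps)
  then have "inner v u - D \<le> \<epsilon> * (2 + norm v + norm u)"
    using t by simp
  then show ?thesis
    by linarith
qed

lemma frechet_subdiff_curve_estimate:
  assumes v: "v \<in> frechet_subdiff f (\<gamma> 0)"
    and fin: "eventually (\<lambda>t. \<bar>f (\<gamma> t)\<bar> \<noteq> \<infinity>) (at 0)"
    and dp: "((\<lambda>t. real_of_ereal (f (\<gamma> t))) has_real_derivative D) (at 0)"
    and d\<gamma>: "(\<gamma> has_vector_derivative u) (at 0)"
    and \<epsilon>: "0 < \<epsilon>" "\<epsilon> \<le> 1"
  shows "inner v u \<le> D + \<epsilon> * (2 + norm v + norm u)"
proof -
  define p where "p t = real_of_ereal (f (\<gamma> t))" for t
  obtain dF where dF: "dF > 0"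
    "\<And>z. dist z (\<gamma> 0) < dF \<Longrightarrow> ereal (p 0 + inner v (z - \<gamma> 0) - \<epsilon> * norm (z - \<gamma> 0)) \<le> f z"
    using v \<epsilon>(1) unfolding frechet_subdiff_def p_def by blast
  have "\<forall>\<^sub>F t in at 0. norm (p t - p 0 - D * (t - 0)) \<le> \<epsilon> * norm (t - 0)"
    using dp \<epsilon>(1) unfolding p_def has_field_derivative_def has_derivative_within_alt2 by blast
  moreover have "\<forall>\<^sub>F t in at 0. norm (\<gamma> t - \<gamma> 0 - (t - 0) *\<^sub>R u) \<le> \<epsilon> * norm (t - 0)"
    using d\<gamma> \<epsilon>(1) unfolding has_vector_derivative_def has_derivative_within_alt2 by blast
  moreover have "\<forall>\<^sub>F t in at 0. dist (\<gamma> t) (\<gamma> 0) < dF"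
    using has_vector_derivative_continuous[OF d\<gamma>] dF(1) unfolding continuous_at by (rule tendstoD)
  ultimately have "\<forall>\<^sub>F t in at 0. norm (p t - p 0 - D * t) \<le> \<epsilon> * \<bar>t\<bar> \<and>
      norm (\<gamma> t - \<gamma> 0 - t *\<^sub>R u) \<le> \<epsilon> * \<bar>t\<bar> \<and> dist (\<gamma> t) (\<gamma> 0) < dF \<and> \<bar>f (\<gamma> t)\<bar> \<noteq> \<infinity>"
    using fin by eventually_elim simp
  then have "\<forall>\<^sub>F t in at_right 0. norm (p t - p 0 - D * t) \<le> \<epsilon> * \<bar>t\<bar> \<and>
      norm (\<gamma> t - \<gamma> 0 - t *\<^sub>R u) \<le> \<epsilon> * \<bar>t\<bar> \<and> dist (\<gamma> t) (\<gamma> 0) < dF \<and> \<bar>f (\<gamma> t)\<bar> \<noteq> \<infinity>"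
    by (rule filter_leD[OF at_le, rotated]) simp
  moreover have "\<forall>\<^sub>F t in at_right 0. (0::real) < t"
    by (rule eventually_at_right_less)
  ultimately have "\<forall>\<^sub>F t in at_right 0. 0 < t \<and> norm (p t - p 0 - D * t) \<le> \<epsilon> * t \<and>
      norm (\<gamma> t - \<gamma> 0 - t *\<^sub>R u) \<le> \<epsilon> * t \<and> dist (\<gamma> t) (\<gamma> 0) < dF \<and> \<bar>f (\<gamma> t)\<bar> \<noteq> \<infinity>"
    by eventually_elim simp
  then have "\<exists>t. 0 < t \<and> norm (p t - p 0 - D * t) \<le> \<epsilon> * t \<and>
      norm (\<gamma> t - \<gamma> 0 - t *\<^sub>R u) \<le> \<epsilon> * t \<and> dist (\<gamma> t) (\<gamma> 0) < dF \<and> \<bar>f (\<gamma> t)\<bar> \<noteq> \<infinity>"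
    by (rule eventually_happens'[OF trivial_limit_at_right_real])
  then obtain t where t: "0 < t" "norm (p t - p 0 - D * t) \<le> \<epsilon> * t"
    "norm (\<gamma> t - \<gamma> 0 - t *\<^sub>R u) \<le> \<epsilon> * t" "dist (\<gamma> t) (\<gamma> 0) < dF" "\<bar>f (\<gamma> t)\<bar> \<noteq> \<infinity>"
    by (elim exE conjE)
  have "f (\<gamma> t) = ereal (p t)"
    using t(5) unfolding p_def by (cases "f (\<gamma> t)") auto
  then have "p 0 + inner v (\<gamma> t - \<gamma> 0) - \<epsilon> * norm (\<gamma> t - \<gamma> 0) \<le> p t"
    using dF(2)[OF t(4)] by simp
  moreover have "p t - p 0 \<le> D * t + \<epsilon> * t"
    using t(2) by (simp add: abs_le_iff)
  ultimately show ?thesis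
    using frechet_curve_step_estimate[OF t(1) \<epsilon>] t(3) by blast
qed

lemma frechet_subdiff_le_curve_derivative:
  assumes "v \<in> frechet_subdiff f (\<gamma> 0)"
    and "eventually (\<lambda>t. \<bar>f (\<gamma> t)\<bar> \<noteq> \<infinity>) (at 0)"
    and "((\<lambda>t. real_of_ereal (f (\<gamma> t))) has_real_derivative D) (at 0)"
    and "(\<gamma> has_vector_derivative u) (at 0)"
  shows "inner v u \<le> D"
proof (rule field_le_epsilon)
  fix e :: real assume "e > 0"
  define Q where "Q = 2 + norm v + norm u"
  have Q: "Q > 0"
    by (simp add: Q_def add_pos_nonneg)
  have "inner v u \<le> D + min 1 (e / Q) * Q"
    using frechet_subdiff_curve_estimate[OF assms, of "min 1 (e / Q)"] \<open>e > 0\<close> Q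
    by (simp add: Q_def)
  moreover have "min 1 (e / Q) * Q \<le> e / Q * Q"
    using Q by (intro mult_right_mono) auto
  ultimately show "inner v u \<le> D + e"
    using Q by simp
qed

lemma frechet_subdiff_minus_riem_grad_normal:
  assumes rC: "restricted_C1 f M y" and yM: "y \<in> M" and v: "v \<in> frechet_subdiff f y"
  shows "v - riem_grad f M y \<in> normal_space M y"
proof -
  have le: "inner v u \<le> inner (riem_grad f M y) u" if \<gamma>: "curve_in M y \<gamma> u" for \<gamma> u
  proof (rule frechet_subdiff_le_curve_derivative)
    show "v \<in> frechet_subdiff f (\<gamma> 0)" "(\<gamma> has_vector_derivative u) (at 0)"
      using v \<gamma> unfolding curve_in_def by auto
  qed (use restricted_C1_curve_finite[OF rC yM \<gamma>] has_real_derivative_riem_grad[OF rC yM \<gamma>] in auto)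
  have "inner (v - riem_grad f M y) u = 0" if u: "u \<in> tangent_space M y" for u
  proof -
    obtain \<gamma> where \<gamma>: "curve_in M y \<gamma> u"
      using u unfolding tangent_space_def by blast
    show ?thesis
      using le[OF \<gamma>] le[OF curve_in_reflect[OF \<gamma>]] by (simp add: inner_diff_left)
  qed
  then show ?thesis
    unfolding normal_space_def by blast
qed

lemma riem_grad_prox_stationary:
  assumes rC: "restricted_C1 f M y" and yM: "y \<in> M" and lam: "lam > 0" and r: "r > 0"
    and min: "\<And>y'. y' \<in> M \<Longrightarrow> dist y' y < r \<Longrightarrow>
      real_of_ereal (f y) + (norm (y - z))\<^sup>2 / (2 * lam) \<le> real_of_ereal (f y') + (norm (y' - z))\<^sup>2 / (2 * lam)"
  shows "(1 / lam) *\<^sub>R (z - y) - riem_grad f M y \<in> normal_space M y"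
  unfolding normal_space_def
proof (intro CollectI ballI)
  fix u assume "u \<in> tangent_space M y"
  then obtain \<gamma> where \<gamma>: "curve_in M y \<gamma> u"
    unfolding tangent_space_def by blast
  then obtain e where \<gamma>0: "\<gamma> 0 = y" and e: "e > 0" "\<And>t. \<bar>t\<bar> < e \<Longrightarrow> \<gamma> t \<in> M"
    and d\<gamma>: "(\<gamma> has_vector_derivative u) (at 0)"
    unfolding curve_in_def by blast
  define h where "h y' = real_of_ereal (f y') + (norm (y' - z))\<^sup>2 / (2 * lam)" for y'
  have D: "((\<lambda>t. h (\<gamma> t)) has_real_derivative
      inner (riem_grad f M y) u + 2 * inner (y - z) u / (2 * lam)) (at 0)"
    unfolding h_def
    using DERIV_add[OF has_real_derivative_riem_grad[OF rC yM \<gamma>]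
        DERIV_cdivide[OF has_real_derivative_norm_diff_sq[OF d\<gamma>, of z], of "2 * lam"]]
    by (simp add: \<gamma>0)
  obtain d where d: "d > 0" "\<And>t. dist t 0 < d \<Longrightarrow> dist (\<gamma> t) (\<gamma> 0) < r"
    using has_vector_derivative_continuous[OF d\<gamma>] r unfolding continuous_at_eps_delta by blast
  have "h (\<gamma> 0) \<le> h (\<gamma> t)" if "\<bar>0 - t\<bar> < min e d" for t
    using min[of "\<gamma> t"] e(2)[of t] d(2)[of t] that \<gamma>0 by (simp add: h_def dist_real_def)
  then have "inner (riem_grad f M y) u + 2 * inner (y - z) u / (2 * lam) = 0"
    using DERIV_local_min[OF D, of "min e d"] e(1) d(1) by auto
  moreover have "2 * inner (y - z) u / (2 * lam) = - (inner (z - y) u / lam)"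
    using lam by (simp add: inner_diff_left field_simps)
  ultimately show "inner ((1 / lam) *\<^sub>R (z - y) - riem_grad f M y) u = 0"
    by (simp add: inner_diff_left)
qed

section \<open>Partial smoothness\<close>

lemma partly_smooth_atD:
  assumes "partly_smooth_at f M z"
  shows "z \<in> M" "frechet_subdiff f z = limiting_subdiff f z" "limiting_subdiff f z \<noteq> {}"
    "restricted_C1 f M z" "par (limiting_subdiff f z) = normal_space M z"
    "\<And>y X. y \<in> limiting_subdiff f z \<Longrightarrow> (\<And>k. X k \<in> M) \<Longrightarrow> X \<longlonglongrightarrow> z \<Longrightarrow>
        \<exists>Y. (\<forall>k. Y k \<in> limiting_subdiff f (X k)) \<and> Y \<longlonglongrightarrow> y"
proof -
  obtain r where "r > 0" and zM: "z \<in> M"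
    and "\<forall>z'\<in>M \<inter> ball z r. frechet_subdiff f z' = limiting_subdiff f z' \<and> limiting_subdiff f z' \<noteq> {}"
    using assms unfolding partly_smooth_at_def by blast
  then show "z \<in> M" "frechet_subdiff f z = limiting_subdiff f z" "limiting_subdiff f z \<noteq> {}"
    by auto
  show "restricted_C1 f M z" "par (limiting_subdiff f z) = normal_space M z"
    using assms unfolding partly_smooth_at_def by auto
  show "\<And>y X. y \<in> limiting_subdiff f z \<Longrightarrow> (\<And>k. X k \<in> M) \<Longrightarrow> X \<longlonglongrightarrow> z \<Longrightarrow>
      \<exists>Y. (\<forall>k. Y k \<in> limiting_subdiff f (X k)) \<and> Y \<longlonglongrightarrow> y"
    using assms unfolding partly_smooth_at_def by blast
qed

lemma partly_smooth_aroundE: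
  assumes "partly_smooth_around f M xb"
  obtains r where "r > 0" "\<And>z. z \<in> M \<inter> ball xb r \<Longrightarrow> partly_smooth_at f M z"
  using assms unfolding partly_smooth_around_def by blast

lemma riem_grad_in_affine_hull:
  assumes "partly_smooth_at f M y"
  shows "riem_grad f M y \<in> affine hull (limiting_subdiff f y)"
proof -
  note ps = partly_smooth_atD[OF assms]
  obtain v where v: "v \<in> limiting_subdiff f y"
    using ps(3) by blast
  have "v - riem_grad f M y \<in> normal_space M y"
    using frechet_subdiff_minus_riem_grad_normal[OF ps(4,1)] v ps(2) by blast
  then have "riem_grad f M y - v \<in> par (limiting_subdiff f y)"
    unfolding ps(5) normal_space_def by (simp add: inner_diff_left)
  then have "v + (riem_grad f M y - v) \<in> affine hull (limiting_subdiff f y)"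
    using v by (intro affine_hull_add_par) (auto intro: hull_inc)
  then show ?thesis
    by simp
qed

lemma norm_riem_grad_le:
  assumes "partly_smooth_at f M x" "c \<in> limiting_subdiff f x"
  shows "norm (riem_grad f M x) \<le> norm c"
proof -
  note ps = partly_smooth_atD[OF assms(1)]
  define g where "g = riem_grad f M x"
  have "g \<in> tangent_space M x" "c - g \<in> normal_space M x"
    using riem_grad_in_tangent_space[OF ps(4,1)] frechet_subdiff_minus_riem_grad_normal[OF ps(4,1)]
      assms(2) ps(2) unfolding g_def by auto
  then have "inner c g = inner g g"
    unfolding normal_space_def by (simp add: inner_diff_left)
  then have le: "norm g * norm g \<le> norm c * norm g"
    using Cauchy_Schwarz_ineq2[of c g] by (simp add: power2_norm_eq_inner[symmetric] power2_eq_square)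
  have "norm g \<le> norm c"
  proof (cases "norm g = 0")
    case False
    then show ?thesis
      using le by (simp add: mult_le_cancel_right)
  qed simp
  then show ?thesis
    unfolding g_def .
qed

lemma dist0_eq_norm_riem_grad:
  assumes ps: "partly_smooth_at f M x" and small: "norm (riem_grad f M x) < \<eta>"
    and stable: "\<And>w. w \<in> affine hull (limiting_subdiff f x) \<Longrightarrow> norm w < \<eta> \<Longrightarrow> w \<in> limiting_subdiff f x"
  shows "dist0 (limiting_subdiff f x) = ereal (norm (riem_grad f M x))"
proof (rule antisym)
  show "dist0 (limiting_subdiff f x) \<le> ereal (norm (riem_grad f M x))"
    by (intro dist0_le stable riem_grad_in_affine_hull[OF ps] small)
  show "ereal (norm (riem_grad f M x)) \<le> dist0 (limiting_subdiff f x)"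
    by (intro dist0_ge norm_riem_grad_le[OF ps])
qed

text \<open>Sharpness and inner semicontinuity rule out unit normals separating small points of the
  affine hull from the subdifferential at points of M converging to xb: their limit would be a
  normal at xb on which the subdifferential at xb is nonpositive, contradicting
  0 \<in> ri (subdifferential at xb).\<close>
lemma partly_smooth_no_separating_normals:
  assumes ps: "partly_smooth_at f M xb" and zri: "0 \<in> rel_interior (limiting_subdiff f xb)"
    and Y: "\<And>k. Y k \<in> M" "Y \<longlonglongrightarrow> xb" and Wv: "Wv \<longlonglongrightarrow> 0"
    and D: "\<And>k. D k \<in> normal_space M (Y k)" "\<And>k. norm (D k) = 1"
    and sep: "\<And>k v. v \<in> limiting_subdiff f (Y k) \<Longrightarrow> inner (D k) v \<le> inner (D k) (Wv k)"
  shows False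
proof -
  note psx = partly_smooth_atD[OF ps]
  obtain E U W \<phi> \<phi>' wb where ch: "chart M E U W \<phi> \<phi>'" and wb: "wb \<in> W" "\<phi> wb = xb"
    by (rule restricted_C1_chart[OF psx(4,1)]) (rule that)
  have "\<forall>k. D k \<in> sphere 0 1"
    using D(2) by simp
  then obtain d \<sigma> where d: "d \<in> sphere 0 1" "strict_mono \<sigma>" "(D \<circ> \<sigma>) \<longlonglongrightarrow> d"
    by (rule seq_compactE[OF compact_imp_seq_compact[OF compact_sphere]])
  have Ys: "(Y \<circ> \<sigma>) \<longlonglongrightarrow> xb" and Ws: "(Wv \<circ> \<sigma>) \<longlonglongrightarrow> 0"
    using LIMSEQ_subseq_LIMSEQ[OF _ d(2)] Y(2) Wv by auto
  have "d \<in> normal_space M xb"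
    using chart_normal_space_limit[OF ch wb(1), of "Y \<circ> \<sigma>" "D \<circ> \<sigma>" d] Y(1) D(1) Ys d(3) wb(2)
    by auto
  then have dpar: "d \<in> par (limiting_subdiff f xb)"
    using psx(5) by simp
  have nonpos: "inner d y' \<le> 0" if y': "y' \<in> limiting_subdiff f xb" for y'
  proof -
    obtain V where V: "\<forall>k. V k \<in> limiting_subdiff f ((Y \<circ> \<sigma>) k)" "V \<longlonglongrightarrow> y'"
      using psx(6)[OF y', of "Y \<circ> \<sigma>"] Y(1) Ys by auto
    have limV: "(\<lambda>k. inner ((D \<circ> \<sigma>) k) (V k)) \<longlonglongrightarrow> inner d y'"
      by (intro tendsto_inner d(3) V(2))
    have limW: "(\<lambda>k. inner ((D \<circ> \<sigma>) k) ((Wv \<circ> \<sigma>) k)) \<longlonglongrightarrow> inner d 0"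
      by (intro tendsto_inner d(3) Ws)
    have "\<forall>k. inner ((D \<circ> \<sigma>) k) (V k) \<le> inner ((D \<circ> \<sigma>) k) ((Wv \<circ> \<sigma>) k)"
      using sep V(1) by simp
    then have "inner d y' \<le> inner d 0"
      by (intro tendsto_le[OF trivial_limit_sequentially limW limV] always_eventually)
    then show ?thesis
      by simp
  qed
  obtain v where "v \<in> limiting_subdiff f xb" "0 < inner d v"
    using rel_interior_zero_par[OF zri dpar] d(1) by force
  then show False
    using nonpos by force
qed

lemma partly_smooth_small_affine_subgradients:
  assumes xbM: "xb \<in> M" and PS: "partly_smooth_around f M xb"
    and zri: "0 \<in> rel_interior (limiting_subdiff f xb)"
  obtains \<delta> \<eta> where "\<delta> > 0" "\<eta> > 0" "\<And>y. y \<in> M \<inter> ball xb \<delta> \<Longrightarrow> partly_smooth_at f M y"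
    "\<And>y w. y \<in> M \<inter> ball xb \<delta> \<Longrightarrow> w \<in> affine hull (limiting_subdiff f y) \<Longrightarrow> norm w < \<eta> \<Longrightarrow>
       w \<in> limiting_subdiff f y"
proof -
  obtain r0 where r0: "r0 > 0" "\<And>z. z \<in> M \<inter> ball xb r0 \<Longrightarrow> partly_smooth_at f M z"
    by (rule partly_smooth_aroundE[OF PS]) (rule that)
  have "\<exists>\<delta>>0. \<forall>y w. dist y xb < \<delta> \<longrightarrow> dist w 0 < \<delta> \<longrightarrow> y \<in> M \<inter> ball xb r0 \<longrightarrow>
      w \<in> affine hull (limiting_subdiff f y) \<longrightarrow> w \<in> limiting_subdiff f y"
  proof (rule sequentially_imp_near_pair)
    fix Y Wv :: "nat \<Rightarrow> 'a"
    assume Y: "Y \<longlonglongrightarrow> xb" and Wv: "Wv \<longlonglongrightarrow> 0"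
    show "\<exists>k. Y k \<in> M \<inter> ball xb r0 \<longrightarrow> Wv k \<in> affine hull (limiting_subdiff f (Y k)) \<longrightarrow>
        Wv k \<in> limiting_subdiff f (Y k)"
    proof (rule ccontr)
      assume "\<not> ?thesis"
      then have YM: "\<And>k. Y k \<in> M \<inter> ball xb r0"
        and aff: "\<And>k. Wv k \<in> affine hull (limiting_subdiff f (Y k))"
        and out: "\<And>k. Wv k \<notin> limiting_subdiff f (Y k)"
        by auto
      have "\<exists>d. d \<in> normal_space M (Y k) \<and> norm d = 1 \<and>
          (\<forall>v\<in>limiting_subdiff f (Y k). inner d v \<le> inner d (Wv k))" for k
      proof -
        note psk = partly_smooth_atD[OF r0(2)[OF YM]]
        have "convex (limiting_subdiff f (Y k))"
          using convex_frechet_subdiff psk(2) by metis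
        then obtain d where "d \<in> par (limiting_subdiff f (Y k))" "norm d = 1"
          "\<And>v. v \<in> limiting_subdiff f (Y k) \<Longrightarrow> inner d v \<le> inner d (Wv k)"
          by (rule separating_direction_par[OF _ psk(3) aff out]) (rule that)
        then show ?thesis
          using psk(5) by auto
      qed
      then obtain D where "\<And>k. D k \<in> normal_space M (Y k)" "\<And>k. norm (D k) = 1"
        "\<And>k v. v \<in> limiting_subdiff f (Y k) \<Longrightarrow> inner (D k) v \<le> inner (D k) (Wv k)"
        by metis
      moreover have "xb \<in> M \<inter> ball xb r0"
        using xbM r0(1) by simp
      ultimately show False
        using partly_smooth_no_separating_normals[OF r0(2) zri _ Y Wv] YM by blast
    qed
  qed
  then obtain \<delta> where \<delta>: "\<delta> > 0" "\<forall>y w. dist y xb < \<delta> \<longrightarrow> dist w 0 < \<delta> \<longrightarrow> y \<in> M \<inter> ball xb r0 \<longrightarrow>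
      w \<in> affine hull (limiting_subdiff f y) \<longrightarrow> w \<in> limiting_subdiff f y"
    by blast
  show ?thesis
  proof (rule that[of "min \<delta> r0" \<delta>])
    show "partly_smooth_at f M y" if "y \<in> M \<inter> ball xb (min \<delta> r0)" for y
      using that by (intro r0(2)) auto
    show "w \<in> limiting_subdiff f y"
      if "y \<in> M \<inter> ball xb (min \<delta> r0)" "w \<in> affine hull (limiting_subdiff f y)" "norm w < \<delta>" for y w
      using that \<delta>(2) by (auto simp: dist_commute)
  qed (use \<delta>(1) r0(1) in simp_all)
qed

lemma prox_residual_in_affine_hull:
  assumes ps: "partly_smooth_at f M y" and lam: "lam > 0" and r: "r > 0"
    and min: "\<And>y'. y' \<in> M \<Longrightarrow> dist y' y < r \<Longrightarrow>
      real_of_ereal (f y) + (norm (y - z))\<^sup>2 / (2 * lam) \<le> real_of_ereal (f y') + (norm (y' - z))\<^sup>2 / (2 * lam)"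
  shows "(1 / lam) *\<^sub>R (z - y) \<in> affine hull (limiting_subdiff f y)"
proof -
  note psy = partly_smooth_atD[OF ps]
  have "(1 / lam) *\<^sub>R (z - y) - riem_grad f M y \<in> par (limiting_subdiff f y)"
    using riem_grad_prox_stationary[OF psy(4,1) lam r min] psy(5) by simp
  then have "riem_grad f M y + ((1 / lam) *\<^sub>R (z - y) - riem_grad f M y) \<in> affine hull (limiting_subdiff f y)"
    by (intro affine_hull_add_par riem_grad_in_affine_hull[OF ps])
  then show ?thesis
    by simp
qed

text \<open>The minimiser y of f + |. - z|^2 / (2 lam) over a compact piece of M around xb is an
  interior point, so the proximal residual (z - y) / lam lies in the affine hull of the
  subdifferential at y; being small, it is a subgradient.\<close>
lemma partly_smooth_proximal_point:
  assumes xbM: "xb \<in> M" and xbS: "xb \<in> argmin_set f" and PS: "partly_smooth_around f M xb"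
    and zri: "0 \<in> rel_interior (limiting_subdiff f xb)" and lam: "lam > 0"
  obtains \<delta> where "\<delta> > 0"
    "\<And>z. dist z xb < \<delta> \<Longrightarrow> \<exists>y\<in>M. dist y xb \<le> 2 * dist z xb \<and> dist z y \<le> dist z xb \<and>
       (1 / lam) *\<^sub>R (z - y) \<in> limiting_subdiff f y \<and> f y \<le> f xb + ereal ((dist z xb)\<^sup>2 / (2 * lam))"
proof -
  obtain \<delta>R \<eta>R where \<delta>R: "\<delta>R > 0" "\<eta>R > 0"
    and ps: "\<And>y. y \<in> M \<inter> ball xb \<delta>R \<Longrightarrow> partly_smooth_at f M y"
    and stable: "\<And>y w. y \<in> M \<inter> ball xb \<delta>R \<Longrightarrow>
      w \<in> affine hull (limiting_subdiff f y) \<Longrightarrow> norm w < \<eta>R \<Longrightarrow> w \<in> limiting_subdiff f y"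
    by (rule partly_smooth_small_affine_subgradients[OF xbM PS zri]) (rule that)
  have rC: "restricted_C1 f M xb"
    using partly_smooth_atD(4)[OF ps] xbM \<delta>R(1) by simp
  obtain \<rho>c where \<rho>c: "\<rho>c > 0" "\<And>r. r \<le> \<rho>c \<Longrightarrow> compact (M \<inter> cball xb r)"
    "continuous_on (M \<inter> cball xb \<rho>c) (\<lambda>x. real_of_ereal (f x))"
    "\<And>x. x \<in> M \<inter> cball xb \<rho>c \<Longrightarrow> \<bar>f x\<bar> \<noteq> \<infinity>"
    by (rule restricted_C1_compact_nbhd[OF rC xbM]) (rule that)
  define \<rho> where "\<rho> = min \<delta>R \<rho>c"
  have \<rho>: "\<rho> > 0" "\<rho> \<le> \<delta>R" "\<rho> \<le> \<rho>c"
    using \<delta>R(1) \<rho>c(1) by (auto simp: \<rho>_def)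
  define C where "C = M \<inter> cball xb (\<rho> / 2)"
  have C: "compact C" "xb \<in> C" "C \<subseteq> M \<inter> cball xb \<rho>c"
    using \<rho>c(2)[of "\<rho> / 2"] \<rho> xbM by (auto simp: C_def)
  have contC: "continuous_on C (\<lambda>x. real_of_ereal (f x))"
    by (rule continuous_on_subset[OF \<rho>c(3) C(3)])
  have finC: "\<And>x. x \<in> C \<Longrightarrow> \<bar>f x\<bar> \<noteq> \<infinity>"
    using C(3) by (intro \<rho>c(4)) auto
  define \<delta> where "\<delta> = min (\<rho> / 4) (lam * \<eta>R)"
  have "\<exists>y\<in>M. dist y xb \<le> 2 * dist z xb \<and> dist z y \<le> dist z xb \<and>
      (1 / lam) *\<^sub>R (z - y) \<in> limiting_subdiff f y \<and> f y \<le> f xb + ereal ((dist z xb)\<^sup>2 / (2 * lam))"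
    if z: "dist z xb < \<delta>" for z
  proof -
    have "\<exists>y. y \<in> C \<and> (\<forall>y'\<in>C. real_of_ereal (f y) + (norm (y - z))\<^sup>2 / (2 * lam)
        \<le> real_of_ereal (f y') + (norm (y' - z))\<^sup>2 / (2 * lam)) \<and>
        dist z y \<le> dist z xb \<and> f y \<le> f xb + ereal ((dist z xb)\<^sup>2 / (2 * lam))"
      by (rule compact_prox_point[where z = z, OF C(1,2) contC finC xbS lam]; blast)
    then obtain y where y: "y \<in> C" and ymin: "\<forall>y'\<in>C. real_of_ereal (f y) + (norm (y - z))\<^sup>2 / (2 * lam)
        \<le> real_of_ereal (f y') + (norm (y' - z))\<^sup>2 / (2 * lam)"
      and yz: "dist z y \<le> dist z xb" and fy: "f y \<le> f xb + ereal ((dist z xb)\<^sup>2 / (2 * lam))"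
      by (elim exE conjE)
    have yxb: "dist y xb \<le> 2 * dist z xb"
      using dist_triangle[of y xb z] yz by (simp add: dist_commute)
    then have yr: "dist y xb < \<rho> / 2"
      using z by (simp add: \<delta>_def)
    then have "dist y xb < \<rho>"
      using zero_le_dist[of y xb] by linarith
    then have yM: "y \<in> M" and yin: "y \<in> M \<inter> ball xb \<delta>R"
      using y \<rho>(2) unfolding C_def by (auto simp: dist_commute)
    have "(1 / lam) *\<^sub>R (z - y) \<in> affine hull (limiting_subdiff f y)"
    proof (rule prox_residual_in_affine_hull[OF ps[OF yin] lam])
      show "0 < \<rho> / 2 - dist y xb"
        using yr by simp
      fix y' assume "y' \<in> M" "dist y' y < \<rho> / 2 - dist y xb"
      then have "y' \<in> C"
        using dist_triangle[of y' xb y] unfolding C_def by (simp add: dist_commute)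
      then show "real_of_ereal (f y) + (norm (y - z))\<^sup>2 / (2 * lam)
          \<le> real_of_ereal (f y') + (norm (y' - z))\<^sup>2 / (2 * lam)"
        using ymin by blast
    qed
    moreover have "norm ((1 / lam) *\<^sub>R (z - y)) < \<eta>R"
    proof -
      have "dist z y < lam * \<eta>R"
        using yz z by (simp add: \<delta>_def)
      moreover have "norm ((1 / lam) *\<^sub>R (z - y)) = dist z y / lam"
        using lam by (simp add: dist_norm)
      ultimately show ?thesis
        using lam by (simp add: pos_divide_less_eq mult.commute)
    qed
    ultimately have "(1 / lam) *\<^sub>R (z - y) \<in> limiting_subdiff f y"
      by (rule stable[OF yin])
    then show ?thesis
      using yM yxb yz fy by blast
  qed
  moreover have "\<delta> > 0"
    using \<rho>(1) lam \<delta>R(2) by (simp add: \<delta>_def)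
  ultimately show ?thesis
    using that by blast
qed

text \<open>Adding the two prox-regularity inequalities gives hypomonotonicity
  (w - v) \<bullet> (x - y) \<le> \<rho> |x - y|^2, and w - v = (\<rho> + 1)(x - y) makes the left side larger.\<close>
lemma prox_regular_pair_eq:
  assumes pr: "\<And>x' x'' v. x' \<in> ball xb e \<Longrightarrow> x'' \<in> ball xb e \<Longrightarrow> v \<in> limiting_subdiff f x' \<Longrightarrow>
      norm (v - 0) < e \<Longrightarrow> f x' < f xb + ereal e \<Longrightarrow>
      ereal (real_of_ereal (f x') + inner v (x'' - x') - \<rho> / 2 * (norm (x'' - x'))\<^sup>2) \<le> f x''"
    and x: "x \<in> ball xb e" "v \<in> limiting_subdiff f x" "norm v < e" "f x < f xb + ereal e"
    and y: "y \<in> ball xb e" "w \<in> limiting_subdiff f y" "norm w < e" "f y < f xb + ereal e"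
    and w: "w = (\<rho> + 1) *\<^sub>R (x - y) + v"
  shows "x = y"
proof -
  obtain a b where ab: "f x = ereal a" "f y = ereal b"
    using limiting_subdiff_finite[OF x(2)] limiting_subdiff_finite[OF y(2)]
    by (cases "f x"; cases "f y") auto
  have "b + inner w (x - y) - \<rho> / 2 * (norm (x - y))\<^sup>2 \<le> a"
    using pr[OF y(1) x(1) y(2)] y(3,4) ab by simp
  moreover have "a + inner v (y - x) - \<rho> / 2 * (norm (y - x))\<^sup>2 \<le> b"
    using pr[OF x(1) y(1) x(2)] x(3,4) ab by simp
  moreover have "inner v (y - x) = - inner v (x - y)" "norm (y - x) = norm (x - y)"
    by (simp_all add: inner_diff_right norm_minus_commute)
  ultimately have "inner (w - v) (x - y) \<le> \<rho> * (norm (x - y))\<^sup>2"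
    by (simp add: inner_diff_left)
  then have "(\<rho> + 1) * (norm (x - y))\<^sup>2 \<le> \<rho> * (norm (x - y))\<^sup>2"
    using w by (simp add: power2_norm_eq_inner)
  then show ?thesis
    by (simp add: algebra_simps)
qed

lemma partly_smooth_identification:
  assumes xbM: "xb \<in> M" and xbS: "xb \<in> argmin_set f" and PS: "partly_smooth_around f M xb"
    and PR: "prox_regular_at f xb 0" and zri: "0 \<in> rel_interior (limiting_subdiff f xb)"
    and SC: "subdiff_continuous_at f xb"
  obtains \<epsilon> \<delta> where "\<epsilon> > 0" "\<delta> > 0"
    "\<And>x v. x \<in> ball xb \<epsilon> \<Longrightarrow> v \<in> limiting_subdiff f x \<Longrightarrow> norm v < \<delta> \<Longrightarrow> x \<in> M"
proof -
  have z0: "0 \<in> limiting_subdiff f xb"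
    using zri rel_interior_subset by blast
  obtain e \<rho> where e: "e > 0" "\<rho> \<ge> 0" and pr: "\<And>x' x'' v. x' \<in> ball xb e \<Longrightarrow> x'' \<in> ball xb e \<Longrightarrow>
      v \<in> limiting_subdiff f x' \<Longrightarrow> norm (v - 0) < e \<Longrightarrow> f x' < f xb + ereal e \<Longrightarrow>
      ereal (real_of_ereal (f x') + inner v (x'' - x') - \<rho> / 2 * (norm (x'' - x'))\<^sup>2) \<le> f x''"
    by (rule prox_regular_at_limiting[OF PR]) (rule that)
  define lam where "lam = 1 / (\<rho> + 1)"
  have lam: "lam > 0" "1 / lam = \<rho> + 1"
    using e(2) by (simp_all add: lam_def)
  obtain \<delta>P where \<delta>P: "\<delta>P > 0" and prox: "\<And>z. dist z xb < \<delta>P \<Longrightarrow> \<exists>y\<in>M. dist y xb \<le> 2 * dist z xb \<and>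
      dist z y \<le> dist z xb \<and> (1 / lam) *\<^sub>R (z - y) \<in> limiting_subdiff f y \<and>
      f y \<le> f xb + ereal ((dist z xb)\<^sup>2 / (2 * lam))"
    by (rule partly_smooth_proximal_point[OF xbM xbS PS zri lam(1)]) (rule that)
  obtain \<delta>C where \<delta>C: "\<delta>C > 0" "\<forall>x v. dist x xb < \<delta>C \<longrightarrow> dist v 0 < \<delta>C \<longrightarrow>
      v \<in> limiting_subdiff f x \<longrightarrow> f x < f xb + ereal e"
    using subdiff_continuous_at_upper[OF SC z0 e(1)] by blast
  define \<tau> where "\<tau> = min (min \<delta>P (e / 2)) (min (lam * e) 1)"
  have \<tau>: "\<tau> > 0" "\<tau> \<le> \<delta>P" "2 * \<tau> \<le> e" "\<tau> \<le> lam * e" "\<tau> \<le> 1"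
    using \<delta>P e(1) lam(1) by (auto simp: \<tau>_def)
  define \<epsilon> where "\<epsilon> = min (min \<delta>C e) (\<tau> / 2)"
  define \<delta> where "\<delta> = min (min \<delta>C e) (\<tau> / (2 * lam))"
  have "x \<in> M" if x: "x \<in> ball xb \<epsilon>" and v: "v \<in> limiting_subdiff f x" and nv: "norm v < \<delta>" for x v
  proof -
    define z where "z = x + lam *\<^sub>R v"
    have "norm v * (2 * lam) < \<tau>"
      using nv lam(1) by (simp add: \<delta>_def pos_less_divide_eq)
    then have "dist z x < \<tau> / 2"
      using lam(1) by (simp add: z_def dist_norm field_simps)
    then have z: "dist z xb < \<tau>"
      using dist_triangle[of z xb x] x by (simp add: \<epsilon>_def dist_commute)
    then obtain y where y: "y \<in> M" "dist y xb \<le> 2 * dist z xb" "dist z y \<le> dist z xb"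
        "(1 / lam) *\<^sub>R (z - y) \<in> limiting_subdiff f y" "f y \<le> f xb + ereal ((dist z xb)\<^sup>2 / (2 * lam))"
      using prox \<tau>(2) by (metis order_less_le_trans)
    have "(1 / lam) *\<^sub>R (z - y) = (1 / lam) *\<^sub>R (x - y) + (1 / lam * lam) *\<^sub>R v"
      unfolding z_def by (simp add: algebra_simps)
    then have "(1 / lam) *\<^sub>R (z - y) = (1 / lam) *\<^sub>R (x - y) + v"
      using lam(1) by simp
    then have w: "(1 / lam) *\<^sub>R (z - y) = (\<rho> + 1) *\<^sub>R (x - y) + v"
      unfolding lam(2) .
    have "(dist z xb)\<^sup>2 \<le> dist z xb"
      using z \<tau>(5) by (simp add: power2_eq_square mult_left_le_one_le)
    also have "\<dots> < lam * e"
      using z \<tau>(4) by simp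
    also have "\<dots> < e * (2 * lam)"
      using lam(1) e(1) by simp
    finally have "(dist z xb)\<^sup>2 / (2 * lam) < e"
      using lam(1) by (simp add: pos_divide_less_eq)
    then have fy: "f y < f xb + ereal e"
      using y(5) limiting_subdiff_finite[OF z0] by (cases "f xb") (auto simp: le_less_trans)
    have "dist x xb < \<delta>C" "dist v 0 < \<delta>C"
      using x nv by (simp_all add: \<epsilon>_def \<delta>_def dist_commute)
    then have fx: "f x < f xb + ereal e"
      using \<delta>C(2) v by blast
    have "norm ((1 / lam) *\<^sub>R (z - y)) = dist z y / lam"
      using lam(1) by (simp add: dist_norm)
    then have "norm ((1 / lam) *\<^sub>R (z - y)) < e"
      using y(3) z \<tau>(4) lam(1) by (simp add: pos_divide_less_eq mult.commute)
    moreover have "y \<in> ball xb e" "x \<in> ball xb e" "norm v < e"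
      using y(2) z \<tau>(3) x nv by (auto simp: \<epsilon>_def \<delta>_def dist_commute)
    ultimately have "x = y"
      using prox_regular_pair_eq[OF pr _ v _ fx _ y(4) _ fy w] by blast
    then show ?thesis
      using y(1) by simp
  qed
  moreover have "\<epsilon> > 0" "\<delta> > 0"
    using \<delta>C(1) e(1) \<tau>(1) lam(1) by (simp_all add: \<epsilon>_def \<delta>_def)
  ultimately show ?thesis
    using that by blast
qed

lemma argmin_subset_if_identification:
  assumes xbS: "xb \<in> argmin_set f" "\<bar>f xb\<bar> \<noteq> \<infinity>" and \<delta>: "\<delta> > 0"
    and ident: "\<And>x v. x \<in> ball xb \<epsilon> \<Longrightarrow> v \<in> limiting_subdiff f x \<Longrightarrow> norm v < \<delta> \<Longrightarrow> x \<in> M"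
  shows "argmin_set f \<inter> ball xb \<epsilon> \<subseteq> M"
proof
  fix s assume s: "s \<in> argmin_set f \<inter> ball xb \<epsilon>"
  then have "f s = f xb"
    using xbS(1) unfolding argmin_set_def by (auto intro: antisym)
  then have "0 \<in> frechet_subdiff f s"
    using s xbS(2) by (intro zero_frechet_subdiff_argmin) auto
  then show "s \<in> M"
    using ident[of s 0] s \<delta> frechet_subdiff_subset_limiting by auto
qed

lemma dist0_ge_if_identification:
  assumes ident: "\<And>x v. x \<in> ball xb \<epsilon> \<Longrightarrow> v \<in> limiting_subdiff f x \<Longrightarrow> norm v < \<delta> \<Longrightarrow> x \<in> M"
    and x: "x \<in> ball xb \<epsilon>" "x \<notin> M"
  shows "ereal \<delta> \<le> dist0 (limiting_subdiff f x)"
  using ident[OF x(1)] x(2) by (intro dist0_ge) (meson not_le)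

section \<open>Error bounds\<close>

lemma infdist_Int_eq_local:
  fixes S T :: "'a::metric_space set"
  assumes a: "a \<in> S" and ST: "S \<inter> ball a r \<subseteq> T" and x: "dist x a < r / 2"
  shows "infdist x (S \<inter> T) = infdist x S"
proof (rule antisym)
  have "r > 0"
    using x zero_le_dist[of x a] by linarith
  then have aST: "a \<in> S \<inter> T"
    using a ST by auto
  have "infdist x (S \<inter> T) \<le> dist x s" if s: "s \<in> S" for s
  proof (cases "dist s a < r")
    case True
    then show ?thesis
      using s ST by (intro infdist_le) (auto simp: dist_commute)
  next
    case False
    have "infdist x (S \<inter> T) \<le> dist x a"
      by (rule infdist_le[OF aST])
    also have "\<dots> \<le> dist x s"
      using False x dist_triangle[of s a x] by (simp add: dist_commute)
    finally show ?thesis .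
  qed
  moreover have "S \<noteq> {}"
    using a by auto
  ultimately show "infdist x (S \<inter> T) \<le> infdist x S"
    unfolding infdist_notempty[OF \<open>S \<noteq> {}\<close>] by (intro cINF_greatest)
  show "infdist x S \<le> infdist x (S \<inter> T)"
    using aST by (intro infdist_mono) auto
qed

lemma scaled_infdist_le:
  assumes "a \<in> S" "dist x a < \<epsilon>" "0 \<le> \<mu>" "\<mu> \<le> \<eta> / \<epsilon>"
  shows "\<mu> * infdist x S \<le> \<eta>"
proof -
  have \<epsilon>: "\<epsilon> > 0"
    using assms(2) zero_le_dist[of x a] by linarith
  have "infdist x S \<le> \<epsilon>"
    using infdist_le[OF assms(1), of x] assms(2) by linarith
  then have "\<mu> * infdist x S \<le> \<eta> / \<epsilon> * \<epsilon>"
    using assms(3,4) infdist_nonneg by (intro mult_mono) auto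
  then show ?thesis
    using \<epsilon> by simp
qed

lemma error_bound_restrict:
  fixes a :: "'a::metric_space" and d :: "'a \<Rightarrow> ereal" and g :: "'a \<Rightarrow> real"
  assumes eb: "\<And>x. x \<in> ball a \<epsilon> \<Longrightarrow> ereal (\<mu> * infdist x S) \<le> d x" and \<epsilon>: "\<epsilon> > 0" "\<mu> > 0"
    and aS: "a \<in> S" and r: "r > 0" and \<eta>: "\<eta> > 0"
    and le_g: "\<And>x. x \<in> ball a r \<inter> M \<Longrightarrow> g x < \<eta> \<Longrightarrow> d x \<le> ereal (g x)"
    and infd: "\<And>x. x \<in> ball a r \<Longrightarrow> infdist x (S \<inter> M) = infdist x S"
  shows "\<exists>\<epsilon>>0. \<exists>\<mu>>0. \<forall>x\<in>ball a \<epsilon> \<inter> M. \<mu> * infdist x (S \<inter> M) \<le> g x"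
proof -
  define \<epsilon>' where "\<epsilon>' = min \<epsilon> r"
  define \<mu>' where "\<mu>' = min \<mu> (\<eta> / \<epsilon>')"
  have "\<mu>' * infdist x (S \<inter> M) \<le> g x" if x: "x \<in> ball a \<epsilon>' \<inter> M" for x
  proof (cases "g x < \<eta>")
    case True
    have xr: "x \<in> ball a r \<inter> M"
      using x by (auto simp: \<epsilon>'_def)
    have "ereal (\<mu> * infdist x S) \<le> d x"
      using x by (intro eb) (auto simp: \<epsilon>'_def)
    also have "\<dots> \<le> ereal (g x)"
      by (rule le_g[OF xr True])
    finally have "\<mu> * infdist x S \<le> g x"
      by simp
    moreover have "\<mu>' * infdist x S \<le> \<mu> * infdist x S"
      by (rule mult_right_mono) (simp_all add: \<mu>'_def infdist_nonneg)
    ultimately show ?thesis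
      using infd xr by simp
  next
    case False
    have "\<mu>' * infdist x S \<le> \<eta>"
      using x \<epsilon> \<eta> r by (intro scaled_infdist_le[OF aS, where \<epsilon> = \<epsilon>']) (auto simp: \<mu>'_def \<epsilon>'_def dist_commute)
    then show ?thesis
      using False infd x by (simp add: \<epsilon>'_def)
  qed
  moreover have "\<epsilon>' > 0" "\<mu>' > 0"
    using \<epsilon> r \<eta> by (simp_all add: \<epsilon>'_def \<mu>'_def)
  ultimately show ?thesis
    by blast
qed

lemma error_bound_extend:
  fixes a :: "'a::metric_space" and d :: "'a \<Rightarrow> ereal" and g :: "'a \<Rightarrow> real"
  assumes eb: "\<And>x. x \<in> ball a \<epsilon> \<inter> M \<Longrightarrow> \<mu> * infdist x (S \<inter> M) \<le> g x" and \<epsilon>: "\<epsilon> > 0" "\<mu> > 0"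
    and aS: "a \<in> S" and r: "r > 0" and \<eta>: "\<eta> > 0"
    and g_le: "\<And>x. x \<in> ball a r \<inter> M \<Longrightarrow> ereal (g x) \<le> d x"
    and off_M: "\<And>x. x \<in> ball a r \<Longrightarrow> x \<notin> M \<Longrightarrow> ereal \<eta> \<le> d x"
    and infd: "\<And>x. x \<in> ball a r \<Longrightarrow> infdist x (S \<inter> M) = infdist x S"
  shows "\<exists>\<epsilon>>0. \<exists>\<mu>>0. \<forall>x\<in>ball a \<epsilon>. ereal (\<mu> * infdist x S) \<le> d x"
proof -
  define \<epsilon>' where "\<epsilon>' = min \<epsilon> r"
  define \<mu>' where "\<mu>' = min \<mu> (\<eta> / \<epsilon>')"
  have "ereal (\<mu>' * infdist x S) \<le> d x" if x: "x \<in> ball a \<epsilon>'" for x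
  proof (cases "x \<in> M")
    case True
    then have xr: "x \<in> ball a r \<inter> M"
      using x by (auto simp: \<epsilon>'_def)
    have "infdist x S = infdist x (S \<inter> M)"
      using infd xr by simp
    then have "\<mu>' * infdist x S \<le> \<mu> * infdist x (S \<inter> M)"
      by (simp add: \<mu>'_def mult_right_mono infdist_nonneg)
    also have "\<dots> \<le> g x"
      using x True by (intro eb) (auto simp: \<epsilon>'_def)
    finally have "ereal (\<mu>' * infdist x S) \<le> ereal (g x)"
      by simp
    also have "\<dots> \<le> d x"
      by (rule g_le[OF xr])
    finally show ?thesis .
  next
    case False
    have "\<mu>' * infdist x S \<le> \<eta>"
      using x \<epsilon> \<eta> r by (intro scaled_infdist_le[OF aS, where \<epsilon> = \<epsilon>']) (auto simp: \<mu>'_def \<epsilon>'_def dist_commute)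
    then have "ereal (\<mu>' * infdist x S) \<le> ereal \<eta>"
      by simp
    also have "\<dots> \<le> d x"
      using off_M False x by (simp add: \<epsilon>'_def)
    finally show ?thesis .
  qed
  moreover have "\<epsilon>' > 0" "\<mu>' > 0"
    using \<epsilon> r \<eta> by (simp_all add: \<epsilon>'_def \<mu>'_def)
  ultimately show ?thesis
    by blast
qed

lemma local_error_bound_transfer:
  fixes a :: "'a::metric_space" and d :: "'a \<Rightarrow> ereal" and g :: "'a \<Rightarrow> real"
  assumes "a \<in> S" "r > 0" "\<eta> > 0"
    and "\<And>x. x \<in> ball a r \<inter> M \<Longrightarrow> ereal (g x) \<le> d x"
    and "\<And>x. x \<in> ball a r \<inter> M \<Longrightarrow> g x < \<eta> \<Longrightarrow> d x \<le> ereal (g x)"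
    and "\<And>x. x \<in> ball a r \<Longrightarrow> x \<notin> M \<Longrightarrow> ereal \<eta> \<le> d x"
    and "\<And>x. x \<in> ball a r \<Longrightarrow> infdist x (S \<inter> M) = infdist x S"
  shows "(\<exists>\<epsilon>>0. \<exists>\<mu>>0. \<forall>x\<in>ball a \<epsilon>. ereal (\<mu> * infdist x S) \<le> d x) \<longleftrightarrow>
    (\<exists>\<epsilon>>0. \<exists>\<mu>>0. \<forall>x\<in>ball a \<epsilon> \<inter> M. \<mu> * infdist x (S \<inter> M) \<le> g x)"
proof
  assume "\<exists>\<epsilon>>0. \<exists>\<mu>>0. \<forall>x\<in>ball a \<epsilon>. ereal (\<mu> * infdist x S) \<le> d x"
  then obtain \<epsilon> \<mu> where "\<epsilon> > 0" "\<mu> > 0" "\<And>x. x \<in> ball a \<epsilon> \<Longrightarrow> ereal (\<mu> * infdist x S) \<le> d x"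
    by blast
  then show "\<exists>\<epsilon>>0. \<exists>\<mu>>0. \<forall>x\<in>ball a \<epsilon> \<inter> M. \<mu> * infdist x (S \<inter> M) \<le> g x"
    using assms by (intro error_bound_restrict)
next
  assume "\<exists>\<epsilon>>0. \<exists>\<mu>>0. \<forall>x\<in>ball a \<epsilon> \<inter> M. \<mu> * infdist x (S \<inter> M) \<le> g x"
  then obtain \<epsilon> \<mu> where "\<epsilon> > 0" "\<mu> > 0" "\<And>x. x \<in> ball a \<epsilon> \<inter> M \<Longrightarrow> \<mu> * infdist x (S \<inter> M) \<le> g x"
    by blast
  then show "\<exists>\<epsilon>>0. \<exists>\<mu>>0. \<forall>x\<in>ball a \<epsilon>. ereal (\<mu> * infdist x S) \<le> d x"
    using assms by (intro error_bound_extend)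
qed

theorem theorem6:
  fixes f :: "'a::euclidean_space \<Rightarrow> ereal" and M :: "'a set" and xbar :: 'a
  assumes "proper_fun f" and "closed_fun f"
    and "argmin_set f \<noteq> {}"
    and "xbar \<in> argmin_set f"
    and "C1_submanifold M" and "xbar \<in> M"
    and "partly_smooth_around f M xbar"
    and "prox_regular_around f M xbar"
    and "0 \<in> rel_interior (limiting_subdiff f xbar)"
    and "subdiff_continuous_at f xbar"
  shows "(\<exists>\<epsilon>>0. \<exists>\<mu>>0. \<forall>x\<in>ball xbar \<epsilon>.
            ereal (\<mu> * infdist x (argmin_set f)) \<le> dist0 (limiting_subdiff f x))
     \<longleftrightarrow> (\<exists>\<epsilon>>0. \<exists>\<mu>>0. \<forall>x\<in>ball xbar \<epsilon> \<inter> M.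
            \<mu> * infdist x (argmin_set f \<inter> M) \<le> norm (riem_grad f M x))"
proof -
  note xbS = assms(4) and xbM = assms(6) and PS = assms(7) and zri = assms(9)
  have z0: "0 \<in> limiting_subdiff f xbar"
    using zri rel_interior_subset by blast
  then have "prox_regular_at f xbar 0"
    using assms(8) xbM unfolding prox_regular_around_def by force
  then obtain \<epsilon>I \<delta>I where \<epsilon>I: "\<epsilon>I > 0" "\<delta>I > 0" and ident: "\<And>x v. x \<in> ball xbar \<epsilon>I \<Longrightarrow>
      v \<in> limiting_subdiff f x \<Longrightarrow> norm v < \<delta>I \<Longrightarrow> x \<in> M"
    by (rule partly_smooth_identification[OF xbM xbS PS _ zri assms(10)]) (rule that)
  obtain \<delta>R \<eta>R where \<delta>R: "\<delta>R > 0" "\<eta>R > 0"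
    and ps: "\<And>y. y \<in> M \<inter> ball xbar \<delta>R \<Longrightarrow> partly_smooth_at f M y"
    and stable: "\<And>y w. y \<in> M \<inter> ball xbar \<delta>R \<Longrightarrow>
      w \<in> affine hull (limiting_subdiff f y) \<Longrightarrow> norm w < \<eta>R \<Longrightarrow> w \<in> limiting_subdiff f y"
    by (rule partly_smooth_small_affine_subgradients[OF xbM PS zri]) (rule that)
  have argmin_M: "argmin_set f \<inter> ball xbar \<epsilon>I \<subseteq> M"
    using xbS limiting_subdiff_finite[OF z0] \<epsilon>I(2) ident by (rule argmin_subset_if_identification)
  define r where "r = min \<delta>R \<epsilon>I / 2"
  have r: "r > 0" "r \<le> \<delta>R" "r \<le> \<epsilon>I / 2"
    using \<delta>R(1) \<epsilon>I(1) by (auto simp: r_def)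
  show ?thesis
  proof (rule local_error_bound_transfer[OF xbS r(1), of "min \<eta>R \<delta>I"])
    fix x assume "x \<in> ball xbar r \<inter> M"
    then have x: "x \<in> M \<inter> ball xbar \<delta>R"
      using r(2) by auto
    show "ereal (norm (riem_grad f M x)) \<le> dist0 (limiting_subdiff f x)"
      by (intro dist0_ge norm_riem_grad_le[OF ps[OF x]])
    assume "norm (riem_grad f M x) < min \<eta>R \<delta>I"
    then have "dist0 (limiting_subdiff f x) = ereal (norm (riem_grad f M x))"
      by (intro dist0_eq_norm_riem_grad[where \<eta> = \<eta>R, OF ps[OF x] _ stable[OF x]]) simp_all
    then show "dist0 (limiting_subdiff f x) \<le> ereal (norm (riem_grad f M x))"
      by simp
  next
    fix x assume "x \<in> ball xbar r" "x \<notin> M"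
    then have "ereal \<delta>I \<le> dist0 (limiting_subdiff f x)"
      using r(3) \<epsilon>I(1) by (intro dist0_ge_if_identification[OF ident]) auto
    then show "ereal (min \<eta>R \<delta>I) \<le> dist0 (limiting_subdiff f x)"
      by (rule order_trans[rotated]) simp
  next
    fix x assume "x \<in> ball xbar r"
    then show "infdist x (argmin_set f \<inter> M) = infdist x (argmin_set f)"
      using r(3) by (intro infdist_Int_eq_local[OF xbS argmin_M]) (simp add: dist_commute)
  qed (use \<delta>R(2) \<epsilon>I(2) in simp)
qed

end
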